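(* Let $(\mathbf{v}_i)_{i\ge1}$ be $[0,1]$-valued random variables that are conditionally i.i.d. given $\boldsymbol{\nu}$ with law $\boldsymbol{\nu}$, where $\boldsymbol{\nu}$ is a species sampling process on $[0,1]$ with base measure $\nu_0$ and EPPF $\pi_\nu$. Let $\mathbf{W}=(\mathbf{w}_j)_{j\ge1}$ with $\mathbf{w}_1=\mathbf{v}_1$, $\mathbf{w}_j=\mathbf{v}_j\prod_{i<j}(1-\mathbf{v}_i)$, and let $(\mathbf{d}_i)_{i\ge1}$ be conditionally i.i.d. given $\mathbf{W}$ with $\mathbb{P}[\mathbf{d}_i=j\mid\mathbf{W}]=\mathbf{w}_j$. Then for every $n\ge1$ and $d_1,\dots,d_n\in\mathbb{N}$, $$\mathbb{P}[\mathbf{d}_1=d_1,\dots,\mathbf{d}_n=d_n]=\sum_{\{A_1,\dots,A_m\}}\pi_\nu(|A_1|,\dots,|A_m|)\prod_{j=1}^m\int_{[0,1]}v^{\sum_{i\in A_j}r_i}(1-v)^{\sum_{i\in A_j}t_i}\,\nu_0(dv),$$ where $r_i=\sum_{l=1}^n\mathbf{1}_{\{d_l=i\}}$, $t_i=\sum_{l=1}^n\mathbf{1}_{\{d_l>i\}}$, and the sum ranges over all partitions $\{A_1,\dots,A_m\}$ of $\{1,\dots,k\}$ with $k=\max\{d_1,\dots,d_n\}$.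
   Context: A species sampling process on $[0,1]$ with diffuse base measure $\nu_0$ is a random probability measure $\boldsymbol{\nu}=\sum_{j\ge1}\mathbf{p}_j\delta_{\boldsymbol{\eta}_j}+(1-\sum_j\mathbf{p}_j)\nu_0$ with $\mathbf{p}_j\ge0$, $\sum_j\mathbf{p}_j\le1$ a.s., independent of i.i.d. atoms $\boldsymbol{\eta}_j\sim\nu_0$. Its EPPF is the symmetric function $\pi_\nu$ such that, for $(\mathbf{v}_i)$ conditionally i.i.d. from $\boldsymbol{\nu}$, the random partition of $\{1,\dots,k\}$ induced by ties among $\mathbf{v}_1,\dots,\mathbf{v}_k$ equals a given partition $\{A_1,\dots,A_m\}$ with probability $\pi_\nu(|A_1|,\dots,|A_m|)$. *)

theory Defs
  imports "HOL-Probability.Probability" "HOL-Library.Disjoint_Sets" "HOL-Library.Multiset"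
begin

definition U01 :: "real measure" where
  "U01 = restrict_space borel {0..1}"

definition diffuse_base :: "real measure \<Rightarrow> bool" where
  "diffuse_base \<nu>0 \<longleftrightarrow> \<nu>0 \<in> space (prob_algebra U01) \<and> (\<forall>x. emeasure \<nu>0 {x} = 0)"

definition species_sampling ::
  "'a measure \<Rightarrow> real measure \<Rightarrow> (nat \<Rightarrow> 'a \<Rightarrow> real) \<Rightarrow> (nat \<Rightarrow> 'a \<Rightarrow> real) \<Rightarrow> ('a \<Rightarrow> real measure) \<Rightarrow> bool"
  where
  "species_sampling M \<nu>0 p \<eta> \<nu> \<longleftrightarrow>
     (\<forall>j. p j \<in> borel_measurable M) \<and>
     (\<forall>j. \<eta> j \<in> M \<rightarrow>\<^sub>M U01) \<and>
     prob_space.indep_vars M (\<lambda>_. U01) \<eta> UNIV \<and>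
     (\<forall>j. distr M U01 (\<eta> j) = \<nu>0) \<and>
     prob_space.indep_var M (Pi\<^sub>M UNIV (\<lambda>_. borel)) (\<lambda>\<omega> j. p j \<omega>)
                            (Pi\<^sub>M UNIV (\<lambda>_. U01)) (\<lambda>\<omega> j. \<eta> j \<omega>) \<and>
     (AE \<omega> in M. (\<forall>j. 0 \<le> p j \<omega>) \<and> summable (\<lambda>j. p j \<omega>) \<and> (\<Sum>j. p j \<omega>) \<le> 1) \<and>
     \<nu> \<in> M \<rightarrow>\<^sub>M prob_algebra U01 \<and>
     (AE \<omega> in M. \<forall>B\<in>sets U01.
        measure (\<nu> \<omega>) B = (\<Sum>j. p j \<omega> * indicator B (\<eta> j \<omega>)) + (1 - (\<Sum>j. p j \<omega>)) * measure \<nu>0 B)"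

definition cond_iid_given_measure ::
  "'a measure \<Rightarrow> ('a \<Rightarrow> real measure) \<Rightarrow> (nat \<Rightarrow> 'a \<Rightarrow> real) \<Rightarrow> bool" where
  "cond_iid_given_measure M \<nu> v \<longleftrightarrow>
     (\<forall>i\<ge>1. v i \<in> M \<rightarrow>\<^sub>M U01) \<and>
     (\<forall>n A B. A \<in> sets (vimage_algebra (space M) \<nu> (prob_algebra U01)) \<longrightarrow> (\<forall>i. B i \<in> sets U01) \<longrightarrow>
        measure M (A \<inter> {\<omega>\<in>space M. \<forall>i\<in>{1..n}. v i \<omega> \<in> B i})
        = (\<integral>\<omega>. indicator A \<omega> * (\<Prod>i\<in>{1..n}. measure (\<nu> \<omega>) (B i)) \<partial>M))"

text \<open>Stick-breaking weights w_1 = v_1, w_j = v_j prod_{i<j} (1 - v_i), indexed from 1 (w_0 = 0).\<close>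
definition stick_weights :: "(nat \<Rightarrow> 'a \<Rightarrow> real) \<Rightarrow> 'a \<Rightarrow> nat \<Rightarrow> real" where
  "stick_weights v \<omega> j = (if j = 0 then 0 else v j \<omega> * (\<Prod>i\<in>{1..<j}. (1 - v i \<omega>)))"

definition cond_iid_given_weights ::
  "'a measure \<Rightarrow> ('a \<Rightarrow> nat \<Rightarrow> real) \<Rightarrow> (nat \<Rightarrow> 'a \<Rightarrow> nat) \<Rightarrow> bool" where
  "cond_iid_given_weights M W d \<longleftrightarrow>
     (\<forall>i\<ge>1. d i \<in> M \<rightarrow>\<^sub>M count_space UNIV) \<and>
     (\<forall>n A (j :: nat \<Rightarrow> nat). A \<in> sets (vimage_algebra (space M) W (Pi\<^sub>M UNIV (\<lambda>_. borel))) \<longrightarrow>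
        measure M (A \<inter> {\<omega>\<in>space M. \<forall>i\<in>{1..n}. d i \<omega> = j i})
        = (\<integral>\<omega>. indicator A \<omega> * (\<Prod>i\<in>{1..n}. W \<omega> (j i)) \<partial>M))"

text \<open>pi is the EPPF (a symmetric function of the block sizes, encoded on multisets) of the
  random partition induced by ties among v_1, ..., v_k.\<close>
definition is_EPPF :: "'a measure \<Rightarrow> (nat \<Rightarrow> 'a \<Rightarrow> real) \<Rightarrow> (nat multiset \<Rightarrow> real) \<Rightarrow> bool" where
  "is_EPPF M v \<pi> \<longleftrightarrow>
     (\<forall>k\<ge>1. \<forall>P. partition_on {1..k} P \<longrightarrow>
        measure M {\<omega>\<in>space M. \<forall>i\<in>{1..k}. \<forall>j\<in>{1..k}.
                      (v i \<omega> = v j \<omega>) \<longleftrightarrow> (\<exists>A\<in>P. i \<in> A \<and> j \<in> A)}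
        = \<pi> (image_mset card (mset_set P)))"

end

theory Submission
  imports Defs
begin

text \<open>Given the weights \<open>p\<close> and the atoms \<open>\<eta>\<close>, the measure \<open>\<nu>\<close> is the mixture of \<open>\<nu>0\<close>
  (weight \<open>1 - \<Sum>j. p j\<close>) and the point masses at \<open>\<eta> j\<close> (weights \<open>p j\<close>). Sampling
  \<open>v 1, \<dots>, v k\<close> i.i.d. from it amounts to drawing i.i.d. labels \<open>\<sigma> i\<close>, with label \<open>0\<close>
  for a fresh draw from \<open>\<nu>0\<close> and label \<open>Suc j\<close> for the atom \<open>\<eta> j\<close>. As \<open>\<nu>0\<close> is diffuse and the
  atoms are a.s. distinct, \<open>v i = v j\<close> holds a.s. iff \<open>i = j\<close> or \<open>\<sigma> i = \<sigma> j \<noteq> 0\<close>, so the tie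
  partition of the \<open>v i\<close> is the one induced by the labels. On the event that it equals \<open>P\<close>, the
  \<open>v i\<close> are constant on the blocks of \<open>P\<close>, and the block values are i.i.d. \<open>\<nu>0\<close> and independent of
  the labels, because the atoms are i.i.d. \<open>\<nu>0\<close> and independent of \<open>p\<close>. Hence
  \<open>E[\<Prod>i. g i (v i); ties = P] = \<pi> P * (\<Prod>A\<in>P. \<integral> \<Prod>i\<in>A. g i d\<nu>0)\<close>. The theorem is the case
  \<open>g i x = x ^ r i * (1 - x) ^ t i\<close>, since given \<open>v\<close> the probability that \<open>d l = dd l\<close> for all \<open>l\<close>
  is \<open>\<Prod>l. w (dd l) = \<Prod>i\<le>k. v i ^ r i * (1 - v i) ^ t i\<close>.\<close>

lemma space_U01 [simp]: "space U01 = {0..1}"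
  by (simp add: U01_def)

lemma borel_measurable_U01: "f \<in> borel_measurable borel \<Longrightarrow> f \<in> borel_measurable U01"
  by (simp add: U01_def measurable_restrict_space1)

lemma singleton_sets_U01: "x \<in> {0..1} \<Longrightarrow> {x} \<in> sets U01"
  by (simp add: U01_def sets_restrict_space_iff)

lemma borel_measurable_component_U01:
  fixes L :: "'i \<Rightarrow> real measure"
  assumes "i \<in> I" "sets (L i) = sets U01"
  shows "(\<lambda>x. x i) \<in> borel_measurable (PiM I L)"
proof -
  have "(\<lambda>x. x) \<in> L i \<rightarrow>\<^sub>M borel"
    using borel_measurable_U01[of "\<lambda>x. x"] by (simp add: measurable_cong_sets[OF assms(2) refl])
  then show ?thesis
    using assms(1) by (intro measurable_compose[OF measurable_component_singleton]) auto
qed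

lemma diffuse_base_prob_space: "diffuse_base \<nu>0 \<Longrightarrow> prob_space \<nu>0"
  and sets_diffuse_base: "diffuse_base \<nu>0 \<Longrightarrow> sets \<nu>0 = sets U01"
  by (auto simp: diffuse_base_def space_prob_algebra)

lemma nn_integral_ennreal_unit_valued:
  assumes "prob_space N" and h: "h \<in> borel_measurable N"
    and h01: "\<And>x. x \<in> space N \<Longrightarrow> 0 \<le> h x \<and> h x \<le> 1"
  shows "(\<integral>\<^sup>+x. ennreal (h x) \<partial>N) = ennreal (\<integral>x. h x \<partial>N)"
proof (rule nn_integral_eq_integral)
  interpret prob_space N by fact
  show "integrable N h"
    using h h01 by (intro integrable_const_bound[where B=1]) auto
qed (use h01 in auto)

lemma nn_integral_prod_ennreal_unit_valued:
  fixes f :: "'i \<Rightarrow> 'b \<Rightarrow> real"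
  assumes N: "prob_space N" and f: "\<And>i. i \<in> A \<Longrightarrow> f i \<in> borel_measurable N"
    and f01: "\<And>i x. i \<in> A \<Longrightarrow> x \<in> space N \<Longrightarrow> 0 \<le> f i x \<and> f i x \<le> 1"
  shows "(\<integral>\<^sup>+x. (\<Prod>i\<in>A. ennreal (f i x)) \<partial>N) = ennreal (\<integral>x. (\<Prod>i\<in>A. f i x) \<partial>N)"
proof -
  have "(\<integral>\<^sup>+x. (\<Prod>i\<in>A. ennreal (f i x)) \<partial>N) = (\<integral>\<^sup>+x. ennreal (\<Prod>i\<in>A. f i x) \<partial>N)"
    using f01 by (intro nn_integral_cong prod_ennreal) auto
  also have "\<dots> = ennreal (\<integral>x. (\<Prod>i\<in>A. f i x) \<partial>N)"
  proof (rule nn_integral_ennreal_unit_valued[OF N])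
    show "(\<lambda>x. \<Prod>i\<in>A. f i x) \<in> borel_measurable N" using f by (rule borel_measurable_prod)
    show "0 \<le> (\<Prod>i\<in>A. f i x) \<and> (\<Prod>i\<in>A. f i x) \<le> 1" if "x \<in> space N" for x
      using f01[OF _ that] by (intro conjI prod_nonneg prod_le_1) auto
  qed
  finally show ?thesis .
qed

section \<open>Products of kernels and discrete mixtures\<close>

lemma measurable_PiM_prob_kernel:
  assumes I: "finite I"
    and Kp: "\<And>i x. x \<in> space N \<Longrightarrow> prob_space (K i x)"
    and Ks: "\<And>i x. x \<in> space N \<Longrightarrow> sets (K i x) = sets (Mi i)"
    and Km: "\<And>i A. i \<in> I \<Longrightarrow> A \<in> sets (Mi i) \<Longrightarrow> (\<lambda>x. emeasure (K i x) A) \<in> borel_measurable N"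
  shows "(\<lambda>x. PiM I (\<lambda>i. K i x)) \<in> N \<rightarrow>\<^sub>M prob_algebra (PiM I Mi)"
proof (rule measurable_prob_algebra_generated[OF sets_PiM Int_stable_prod_algebra prod_algebra_sets_into_space])
  fix x assume x: "x \<in> space N"
  show "prob_space (PiM I (\<lambda>i. K i x))" by (rule prob_space_PiM) (use Kp x in auto)
  show "sets (PiM I (\<lambda>i. K i x)) = sets (PiM I Mi)" by (rule sets_PiM_cong) (use Ks x in auto)
next
  fix A assume "A \<in> prod_algebra I Mi"
  then obtain E where A: "A = Pi\<^sub>E I E" and E: "E \<in> (\<Pi> i\<in>I. sets (Mi i))"
    by (rule prod_algebraE_all)
  have "(\<lambda>x. \<Prod>i\<in>I. emeasure (K i x) (E i)) \<in> borel_measurable N"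
    using E Km by (intro borel_measurable_prod_ennreal) auto
  moreover have "emeasure (PiM I (\<lambda>i. K i x)) A = (\<Prod>i\<in>I. emeasure (K i x) (E i))"
    if x: "x \<in> space N" for x
  proof -
    interpret product_prob_space "\<lambda>i. K i x"
      using Kp x by (intro product_prob_spaceI) auto
    show ?thesis unfolding A using E Ks x I by (intro emeasure_PiM) auto
  qed
  ultimately show "(\<lambda>x. emeasure (PiM I (\<lambda>i. K i x)) A) \<in> borel_measurable N"
    by (simp cong: measurable_cong)
qed

lemma emeasure_bind_density_count_space:
  assumes S: "S \<noteq> {}" and \<kappa>: "\<And>c. c \<in> S \<Longrightarrow> subprob_space (\<kappa> c)" "\<And>c. c \<in> S \<Longrightarrow> sets (\<kappa> c) = sets N"
    and A: "A \<in> sets N"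
  shows "emeasure (bind (density (count_space S) wt) \<kappa>) A = (\<integral>\<^sup>+c. wt c * emeasure (\<kappa> c) A \<partial>count_space S)"
proof -
  have "\<kappa> \<in> density (count_space S) wt \<rightarrow>\<^sub>M subprob_algebra N"
    using \<kappa> by (subst measurable_cong_sets[OF sets_density refl])
      (auto simp: measurable_count_space_eq1 space_subprob_algebra)
  then have "emeasure (bind (density (count_space S) wt) \<kappa>) A = (\<integral>\<^sup>+c. emeasure (\<kappa> c) A \<partial>density (count_space S) wt)"
    using S A by (intro emeasure_bind) auto
  also have "\<dots> = (\<integral>\<^sup>+c. wt c * emeasure (\<kappa> c) A \<partial>count_space S)"
    by (rule nn_integral_density) auto
  finally show ?thesis .
qed

lemma PiM_bind_discrete_mixture:
  fixes \<kappa> :: "nat \<Rightarrow> 'b measure" and wt :: "nat \<Rightarrow> ennreal"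
  assumes I: "finite I"
    and \<kappa>p: "\<And>c. prob_space (\<kappa> c)" and \<kappa>s: "\<And>c. sets (\<kappa> c) = sets N"
    and W: "prob_space (density (count_space UNIV) wt)"
  shows "PiM I (\<lambda>_. bind (density (count_space UNIV) wt) \<kappa>)
    = bind (density (count_space (PiE I (\<lambda>_. UNIV))) (\<lambda>\<sigma>. \<Prod>i\<in>I. wt (\<sigma> i))) (\<lambda>\<sigma>. PiM I (\<lambda>i. \<kappa> (\<sigma> i)))"
    (is "PiM I (\<lambda>_. ?\<mu>) = bind ?D ?K")
proof -
  have \<kappa>m: "\<kappa> \<in> count_space UNIV \<rightarrow>\<^sub>M prob_algebra N"
    by (auto simp: measurable_count_space_eq1 space_prob_algebra \<kappa>p \<kappa>s)
  have Wsp: "density (count_space UNIV) wt \<in> space (prob_algebra (count_space UNIV))"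
    using W by (auto simp: space_prob_algebra)
  have \<mu>s: "sets ?\<mu> = sets N" using Wsp \<kappa>m by (rule sets_bind')
  interpret P: product_prob_space "\<lambda>_. ?\<mu>"
    using prob_space_bind'[OF Wsp \<kappa>m] by (rule product_prob_spaceI)
  have Kp: "prob_space (?K \<sigma>)" and Ks: "sets (?K \<sigma>) = sets (PiM I (\<lambda>_. N))" for \<sigma>
    using \<kappa>p \<kappa>s by (auto intro!: prob_space_PiM sets_PiM_cong)
  have "bind ?D ?K = PiM I (\<lambda>_. ?\<mu>)"
  proof (rule P.PiM_eqI[OF I])
    show "sets (bind ?D ?K) = sets (PiM I (\<lambda>_. ?\<mu>))"
      using Ks by (subst sets_bind) (auto intro!: sets_PiM_cong simp: \<mu>s)
  next
    fix A assume A: "\<And>i. i \<in> I \<Longrightarrow> A i \<in> sets ?\<mu>"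
    interpret C: product_sigma_finite "\<lambda>_::'a. count_space (UNIV::nat set)"
      by (auto simp: product_sigma_finite_def sigma_finite_measure_count_space)
    have "emeasure (bind ?D ?K) (Pi\<^sub>E I A)
        = (\<integral>\<^sup>+\<sigma>. (\<Prod>i\<in>I. wt (\<sigma> i)) * emeasure (?K \<sigma>) (Pi\<^sub>E I A) \<partial>count_space (PiE I (\<lambda>_. UNIV)))"
      using A Kp Ks by (intro emeasure_bind_density_count_space)
        (auto intro!: sets_PiM_I_finite prob_space_imp_subprob_space simp: I \<mu>s)
    also have "\<dots> = (\<integral>\<^sup>+\<sigma>. (\<Prod>i\<in>I. wt (\<sigma> i) * emeasure (\<kappa> (\<sigma> i)) (A i)) \<partial>count_space (PiE I (\<lambda>_. UNIV)))"
    proof (rule nn_integral_cong)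
      fix \<sigma>
      interpret Q: product_prob_space "\<lambda>i. \<kappa> (\<sigma> i)"
        using \<kappa>p by (rule product_prob_spaceI)
      show "(\<Prod>i\<in>I. wt (\<sigma> i)) * emeasure (?K \<sigma>) (Pi\<^sub>E I A) = (\<Prod>i\<in>I. wt (\<sigma> i) * emeasure (\<kappa> (\<sigma> i)) (A i))"
        using A I by (subst Q.emeasure_PiM) (auto simp: \<kappa>s \<mu>s prod.distrib)
    qed
    also have "\<dots> = (\<integral>\<^sup>+\<sigma>. (\<Prod>i\<in>I. wt (\<sigma> i) * emeasure (\<kappa> (\<sigma> i)) (A i)) \<partial>PiM I (\<lambda>_. count_space UNIV))"
      by (subst count_space_PiM_finite) (auto simp: I)
    also have "\<dots> = (\<Prod>i\<in>I. \<integral>\<^sup>+c. wt c * emeasure (\<kappa> c) (A i) \<partial>count_space UNIV)"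
      by (rule C.product_nn_integral_prod) (auto simp: I)
    also have "\<dots> = (\<Prod>i\<in>I. emeasure ?\<mu> (A i))"
      using A \<kappa>p \<kappa>s
      by (intro prod.cong refl emeasure_bind_density_count_space[symmetric])
        (auto simp: \<mu>s prob_space_imp_subprob_space)
    finally show "emeasure (bind ?D ?K) (Pi\<^sub>E I A) = (\<Prod>i\<in>I. emeasure ?\<mu> (A i))" .
  qed
  then show ?thesis ..
qed

section \<open>Independence and diffuse laws\<close>

lemma AE_PiM_neq_diffuse:
  fixes L :: "'i \<Rightarrow> real measure"
  assumes "product_prob_space L" and I: "finite I" "i \<in> I" "i' \<in> I" "i \<noteq> i'"
    and Ls: "\<And>l. sets (L l) = sets U01"
    and diffuse: "\<And>y. emeasure (L i) {y} = 0"
  shows "AE x in PiM I L. x i \<noteq> x i'"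
proof -
  interpret product_prob_space L by fact
  define J where "J = I - {i}"
  have IJ: "I = insert i J" "i \<notin> J" "finite J" "i' \<in> J" using I by (auto simp: J_def)
  define N where "N = {x\<in>space (PiM I L). x i = x i'}"
  have "(\<lambda>x. x l) \<in> borel_measurable (PiM I L)" if "l \<in> I" for l
    using that Ls by (rule borel_measurable_component_U01)
  then have Nm: "N \<in> sets (PiM I L)"
    unfolding N_def using I by measurable
  have "emeasure (PiM I L) N = (\<integral>\<^sup>+x. indicator N x \<partial>PiM I L)"
    using Nm by simp
  also have "\<dots> = (\<integral>\<^sup>+x. \<integral>\<^sup>+y. indicator N (x(i := y)) \<partial>L i \<partial>PiM J L)"
    unfolding IJ(1) by (rule product_nn_integral_insert) (use IJ Nm in \<open>auto simp: IJ(1)[symmetric]\<close>)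
  also have "\<dots> = (\<integral>\<^sup>+x. 0 \<partial>PiM J L)"
  proof (rule nn_integral_cong)
    fix x assume x: "x \<in> space (PiM J L)"
    have xi': "x i' \<in> {0..1}" using x IJ sets_eq_imp_space_eq[OF Ls[of i']] by (auto simp: space_PiM)
    have "(\<integral>\<^sup>+y. indicator N (x(i := y)) \<partial>L i) = (\<integral>\<^sup>+y. indicator {x i'} y \<partial>L i)"
    proof (rule nn_integral_cong)
      fix y assume y: "y \<in> space (L i)"
      have "x(i := y) \<in> space (PiM I L)" using x y IJ by (auto simp: space_PiM PiE_def extensional_def)
      then show "indicator N (x(i := y)) = (indicator {x i'} y :: ennreal)"
        using IJ I by (auto simp: N_def indicator_def)
    qed
    also have "\<dots> = 0"
      using xi' diffuse by (subst nn_integral_indicator) (auto simp: Ls singleton_sets_U01)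
    finally show "(\<integral>\<^sup>+y. indicator N (x(i := y)) \<partial>L i) = 0" .
  qed
  finally have "N \<in> null_sets (PiM I L)" using Nm by auto
  then show ?thesis by (rule AE_I') (auto simp: N_def)
qed

lemma indep_var_nn_integral_mult:
  assumes M: "prob_space M" and ind: "prob_space.indep_var M S X T Y"
    and a: "a \<in> borel_measurable S" and b: "b \<in> borel_measurable T"
  shows "(\<integral>\<^sup>+\<omega>. a (X \<omega>) * b (Y \<omega>) \<partial>M) = (\<integral>\<^sup>+\<omega>. a (X \<omega>) \<partial>M) * (\<integral>\<^sup>+\<omega>. b (Y \<omega>) \<partial>M)"
proof -
  interpret prob_space M by fact
  have X: "X \<in> M \<rightarrow>\<^sub>M S" and Y: "Y \<in> M \<rightarrow>\<^sub>M T"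
    and D: "distr M S X \<Otimes>\<^sub>M distr M T Y = distr M (S \<Otimes>\<^sub>M T) (\<lambda>x. (X x, Y x))"
    using ind by (auto simp: indep_var_distribution_eq)
  interpret DY: prob_space "distr M T Y" using Y by (rule prob_space_distr)
  have "(\<integral>\<^sup>+\<omega>. a (X \<omega>) * b (Y \<omega>) \<partial>M) = (\<integral>\<^sup>+z. a (fst z) * b (snd z) \<partial>distr M (S \<Otimes>\<^sub>M T) (\<lambda>x. (X x, Y x)))"
    using X Y a b by (subst nn_integral_distr) auto
  also have "\<dots> = (\<integral>\<^sup>+x. \<integral>\<^sup>+y. a x * b y \<partial>distr M T Y \<partial>distr M S X)"
    using a b by (subst D[symmetric], subst DY.nn_integral_fst[symmetric]) auto
  also have "\<dots> = (\<integral>\<^sup>+x. a x \<partial>distr M S X) * (\<integral>\<^sup>+y. b y \<partial>distr M T Y)"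
    using a b by (simp add: nn_integral_cmult nn_integral_multc)
  also have "\<dots> = (\<integral>\<^sup>+\<omega>. a (X \<omega>) \<partial>M) * (\<integral>\<^sup>+\<omega>. b (Y \<omega>) \<partial>M)"
    using X Y a b by (simp add: nn_integral_distr)
  finally show ?thesis .
qed

lemma nn_integral_prod_iid_inj:
  fixes \<eta> :: "nat \<Rightarrow> 'a \<Rightarrow> real" and h :: "'k \<Rightarrow> real \<Rightarrow> ennreal"
  assumes M: "prob_space M" and ind: "prob_space.indep_vars M (\<lambda>_. U01) \<eta> UNIV"
    and \<eta>m: "\<And>j. \<eta> j \<in> M \<rightarrow>\<^sub>M U01" and \<eta>d: "\<And>j. distr M U01 (\<eta> j) = \<nu>0"
    and K: "finite K" "inj_on \<phi> K" and h: "\<And>A. A \<in> K \<Longrightarrow> h A \<in> borel_measurable borel"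
  shows "(\<integral>\<^sup>+\<omega>. (\<Prod>A\<in>K. h A (\<eta> (\<phi> A) \<omega>)) \<partial>M) = (\<Prod>A\<in>K. \<integral>\<^sup>+x. h A x \<partial>\<nu>0)"
proof (cases "K = {}")
  case True
  interpret prob_space M by fact
  show ?thesis using True by (simp add: emeasure_space_1)
next
  case False
  interpret prob_space M by fact
  define J where "J = \<phi> ` K"
  define h' where "h' j = h (inv_into K \<phi> j)" for j
  have J: "finite J" "J \<noteq> {}" using K False by (auto simp: J_def)
  have hU: "j \<in> J \<Longrightarrow> h' j \<in> borel_measurable U01" for j
    using h[of "inv_into K \<phi> j"] by (auto simp: h'_def J_def inv_into_into borel_measurable_U01)
  have reindex: "(\<Prod>A\<in>K. f A (\<phi> A)) = (\<Prod>j\<in>J. f (inv_into K \<phi> j) j)" for f :: "'k \<Rightarrow> nat \<Rightarrow> ennreal"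
    unfolding J_def using K by (subst prod.reindex) (auto simp: inv_into_f_f)
  interpret P: product_prob_space "\<lambda>_::nat. \<nu>0"
    using \<eta>d[of 0] \<eta>m[of 0] by (intro product_prob_spaceI) (metis prob_space_distr)
  have \<nu>0s: "sets \<nu>0 = sets U01" using \<eta>d[of 0] by (metis sets_distr)
  have "indep_vars (\<lambda>_. U01) \<eta> J" using ind by (rule indep_vars_subset) auto
  then have D: "distr M (PiM J (\<lambda>_. U01)) (\<lambda>x. \<lambda>j\<in>J. \<eta> j x) = PiM J (\<lambda>_. \<nu>0)"
    using indep_vars_iff_distr_eq_PiM[OF J(2) \<eta>m] by (simp add: \<eta>d)
  have "(\<lambda>x. \<Prod>j\<in>J. h' j (x j)) \<in> borel_measurable (PiM J (\<lambda>_. U01))"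
    using hU by (intro borel_measurable_prod_ennreal) (auto intro: measurable_compose[OF measurable_component_singleton])
  then have "(\<integral>\<^sup>+\<omega>. (\<Prod>j\<in>J. h' j (\<eta> j \<omega>)) \<partial>M) = (\<integral>\<^sup>+x. (\<Prod>j\<in>J. h' j (x j)) \<partial>PiM J (\<lambda>_. \<nu>0))"
    using \<eta>m by (subst D[symmetric], subst nn_integral_distr) (auto intro!: measurable_restrict)
  also have "\<dots> = (\<Prod>j\<in>J. \<integral>\<^sup>+y. h' j y \<partial>\<nu>0)"
    using hU J by (intro P.product_nn_integral_prod) (auto simp: measurable_cong_sets[OF \<nu>0s refl])
  finally show ?thesis
    using reindex[of "\<lambda>A j. h A (\<eta> j _)"] reindex[of "\<lambda>A j. \<integral>\<^sup>+y. h' j y \<partial>\<nu>0"] K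
    by (simp add: h'_def inv_into_f_f)
qed

lemma AE_inj_iid_diffuse:
  fixes \<eta> :: "nat \<Rightarrow> 'a \<Rightarrow> real"
  assumes M: "prob_space M" and ind: "prob_space.indep_vars M (\<lambda>_. U01) \<eta> UNIV"
    and \<eta>m: "\<And>j. \<eta> j \<in> M \<rightarrow>\<^sub>M U01" and \<eta>d: "\<And>j. distr M U01 (\<eta> j) = \<nu>0"
    and \<nu>0: "diffuse_base \<nu>0"
  shows "AE \<omega> in M. inj (\<lambda>j. \<eta> j \<omega>)"
proof -
  interpret prob_space M by fact
  have "AE \<omega> in M. \<eta> j \<omega> \<noteq> \<eta> j' \<omega>" if jj: "j \<noteq> j'" for j j'
  proof -
    define J where "J = {j, j'}"
    have "indep_vars (\<lambda>_. U01) \<eta> J" using ind by (rule indep_vars_subset) auto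
    then have D: "distr M (PiM J (\<lambda>_. U01)) (\<lambda>x. \<lambda>l\<in>J. \<eta> l x) = PiM J (\<lambda>_. \<nu>0)"
      using indep_vars_iff_distr_eq_PiM[where I=J and M'="\<lambda>_. U01" and X=\<eta>] \<eta>m \<eta>d by (simp add: J_def)
    have "AE x in PiM J (\<lambda>_. \<nu>0). x j \<noteq> x j'"
      using jj \<nu>0 sets_diffuse_base[OF \<nu>0] diffuse_base_prob_space[OF \<nu>0]
      by (intro AE_PiM_neq_diffuse product_prob_spaceI) (auto simp: J_def diffuse_base_def)
    then have "AE x in distr M (PiM J (\<lambda>_. U01)) (\<lambda>x. \<lambda>l\<in>J. \<eta> l x). x j \<noteq> x j'"
      unfolding D .
    from AE_distrD[OF _ this] show ?thesis using \<eta>m by (auto simp: J_def intro!: measurable_restrict)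
  qed
  then have "AE \<omega> in M. \<forall>j j'. j \<noteq> j' \<longrightarrow> \<eta> j \<omega> \<noteq> \<eta> j' \<omega>"
    by (simp add: AE_all_countable)
  then show ?thesis by eventually_elim (auto simp: inj_def)
qed

section \<open>Conditionally i.i.d. sampling\<close>

lemma cond_iid_given_measure_U01:
  assumes "cond_iid_given_measure M \<nu> v" "1 \<le> i"
  shows "v i \<in> M \<rightarrow>\<^sub>M U01" and "v i \<in> borel_measurable M"
proof -
  show vU: "v i \<in> M \<rightarrow>\<^sub>M U01" using assms by (simp add: cond_iid_given_measure_def)
  have "(\<lambda>x. x) \<in> U01 \<rightarrow>\<^sub>M (borel :: real measure)" by (rule borel_measurable_U01) simp
  with vU show "v i \<in> borel_measurable M" by (rule measurable_compose)
qed

lemma emeasure_cond_iid_given_measure: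
  fixes \<nu> :: "'a \<Rightarrow> real measure"
  assumes M: "prob_space M" and \<nu>m: "\<nu> \<in> M \<rightarrow>\<^sub>M prob_algebra U01"
    and C: "cond_iid_given_measure M \<nu> v"
    and A: "\<And>i. i \<in> {1..n} \<Longrightarrow> A i \<in> sets U01"
  shows "emeasure M {\<omega>\<in>space M. \<forall>i\<in>{1..n}. v i \<omega> \<in> A i}
    = (\<integral>\<^sup>+\<omega>. (\<Prod>i\<in>{1..n}. emeasure (\<nu> \<omega>) (A i)) \<partial>M)"
proof -
  interpret prob_space M by fact
  have \<nu>p: "\<omega> \<in> space M \<Longrightarrow> prob_space (\<nu> \<omega>)" for \<omega>
    using measurable_space[OF \<nu>m] by (simp add: space_prob_algebra)
  define B where "B i = (if i \<in> {1..n} then A i else space U01)" for i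
  have B: "\<forall>i. B i \<in> sets U01" using A sets.top[of U01] by (simp add: B_def)
  have "space M \<in> sets (vimage_algebra (space M) \<nu> (prob_algebra U01))"
    by (metis sets.top space_vimage_algebra)
  then have "measure M (space M \<inter> {\<omega>\<in>space M. \<forall>i\<in>{1..n}. v i \<omega> \<in> B i})
      = (\<integral>\<omega>. indicator (space M) \<omega> * (\<Prod>i\<in>{1..n}. measure (\<nu> \<omega>) (B i)) \<partial>M)"
    using C B by (simp add: cond_iid_given_measure_def)
  also have "\<dots> = (\<integral>\<omega>. (\<Prod>i\<in>{1..n}. measure (\<nu> \<omega>) (A i)) \<partial>M)"
    by (intro Bochner_Integration.integral_cong) (auto simp: B_def)
  finally have "emeasure M {\<omega>\<in>space M. \<forall>i\<in>{1..n}. v i \<omega> \<in> A i}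
      = ennreal (\<integral>\<omega>. (\<Prod>i\<in>{1..n}. measure (\<nu> \<omega>) (A i)) \<partial>M)"
    by (simp add: B_def emeasure_eq_measure Int_absorb1 cong: rev_conj_cong)
  also have "\<dots> = (\<integral>\<^sup>+\<omega>. ennreal (\<Prod>i\<in>{1..n}. measure (\<nu> \<omega>) (A i)) \<partial>M)"
    using A \<nu>p measurable_compose[OF \<nu>m measurable_measure_prob_algebra]
    by (intro nn_integral_ennreal_unit_valued[symmetric] prob_space_axioms borel_measurable_prod)
       (auto intro!: prod_nonneg prod_le_1 simp: prob_space.prob_le_1)
  also have "\<dots> = (\<integral>\<^sup>+\<omega>. (\<Prod>i\<in>{1..n}. emeasure (\<nu> \<omega>) (A i)) \<partial>M)"
  proof (rule nn_integral_cong)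
    fix \<omega> assume "\<omega> \<in> space M"
    then interpret N: prob_space "\<nu> \<omega>" by (rule \<nu>p)
    show "ennreal (\<Prod>i\<in>{1..n}. measure (\<nu> \<omega>) (A i)) = (\<Prod>i\<in>{1..n}. emeasure (\<nu> \<omega>) (A i))"
      by (simp add: prod_ennreal N.emeasure_eq_measure)
  qed
  finally show ?thesis .
qed

lemma distr_cond_iid_given_measure:
  fixes \<nu> :: "'a \<Rightarrow> real measure"
  assumes M: "prob_space M" and \<nu>m: "\<nu> \<in> M \<rightarrow>\<^sub>M prob_algebra U01"
    and C: "cond_iid_given_measure M \<nu> v"
  shows "distr M (PiM {1..n} (\<lambda>_. U01)) (\<lambda>\<omega>. \<lambda>i\<in>{1..n}. v i \<omega>)
    = bind M (\<lambda>\<omega>. PiM {1..n} (\<lambda>_. \<nu> \<omega>))"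
    (is "distr M ?U ?V = bind M ?K")
proof (rule measure_eqI_PiM_finite[where M="\<lambda>_. U01" and I="{1..n}" and A="\<lambda>_. space ?U"])
  interpret prob_space M by fact
  have Vm: "?V \<in> M \<rightarrow>\<^sub>M ?U"
    using C by (intro measurable_restrict) (auto simp: cond_iid_given_measure_def)
  have \<nu>p: "\<omega> \<in> space M \<Longrightarrow> prob_space (\<nu> \<omega>)" and \<nu>s: "\<omega> \<in> space M \<Longrightarrow> sets (\<nu> \<omega>) = sets U01" for \<omega>
    using measurable_space[OF \<nu>m] by (auto simp: space_prob_algebra)
  have Km: "?K \<in> M \<rightarrow>\<^sub>M prob_algebra ?U"
    using measurable_compose[OF measurable_prob_algebraD[OF \<nu>m] measurable_emeasure_subprob_algebra]
    by (intro measurable_PiM_prob_kernel) (auto simp: \<nu>p \<nu>s measurable_prob_algebraD)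
  show "sets (distr M ?U ?V) = sets ?U" by simp
  show "sets (bind M ?K) = sets ?U"
    using \<nu>s by (subst sets_bind) (auto intro!: sets_PiM_cong simp: not_empty)
  show "range (\<lambda>_. space ?U) \<subseteq> prod_algebra {1..n} (\<lambda>_. U01)"
    using space_in_prod_algebra[of "{1..n}" "\<lambda>_. U01"] by (auto simp: space_PiM)
  show "emeasure (distr M ?U ?V) (space ?U) \<noteq> \<infinity>"
    using Vm by (subst emeasure_distr) auto
  fix A assume A: "\<And>i. i \<in> {1..n} \<Longrightarrow> A i \<in> sets U01"
  have "emeasure (distr M ?U ?V) (Pi\<^sub>E {1..n} A) = emeasure M {\<omega>\<in>space M. \<forall>i\<in>{1..n}. v i \<omega> \<in> A i}"
    using Vm A by (subst emeasure_distr) (auto intro!: arg_cong[where f="emeasure M"] simp: Pi_iff)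
  also have "\<dots> = (\<integral>\<^sup>+\<omega>. (\<Prod>i\<in>{1..n}. emeasure (\<nu> \<omega>) (A i)) \<partial>M)"
    by (rule emeasure_cond_iid_given_measure[OF M \<nu>m C A])
  also have "\<dots> = (\<integral>\<^sup>+\<omega>. emeasure (?K \<omega>) (Pi\<^sub>E {1..n} A) \<partial>M)"
  proof (rule nn_integral_cong)
    fix \<omega> assume \<omega>: "\<omega> \<in> space M"
    interpret product_prob_space "\<lambda>_. \<nu> \<omega>" using \<nu>p[OF \<omega>] by (rule product_prob_spaceI)
    show "(\<Prod>i\<in>{1..n}. emeasure (\<nu> \<omega>) (A i)) = emeasure (?K \<omega>) (Pi\<^sub>E {1..n} A)"
      using A \<omega> by (subst emeasure_PiM) (auto simp: \<nu>s)
  qed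
  also have "\<dots> = emeasure (bind M ?K) (Pi\<^sub>E {1..n} A)"
    using A by (intro emeasure_bind[symmetric, where N="?U"] measurable_prob_algebraD[OF Km])
      (auto simp: not_empty intro!: sets_PiM_I_finite)
  finally show "emeasure (distr M ?U ?V) (Pi\<^sub>E {1..n} A) = emeasure (bind M ?K) (Pi\<^sub>E {1..n} A)" .
qed auto

lemma nn_integral_cond_iid_given_measure:
  fixes \<nu> :: "'a \<Rightarrow> real measure"
  assumes M: "prob_space M" and \<nu>m: "\<nu> \<in> M \<rightarrow>\<^sub>M prob_algebra U01"
    and C: "cond_iid_given_measure M \<nu> v"
    and H: "H \<in> borel_measurable (PiM {1..n} (\<lambda>_. U01))"
  shows "(\<integral>\<^sup>+\<omega>. H (\<lambda>i\<in>{1..n}. v i \<omega>) \<partial>M) = (\<integral>\<^sup>+\<omega>. \<integral>\<^sup>+x. H x \<partial>PiM {1..n} (\<lambda>_. \<nu> \<omega>) \<partial>M)"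
proof -
  have \<nu>p: "\<omega> \<in> space M \<Longrightarrow> prob_space (\<nu> \<omega>)" and \<nu>s: "\<omega> \<in> space M \<Longrightarrow> sets (\<nu> \<omega>) = sets U01" for \<omega>
    using measurable_space[OF \<nu>m] by (auto simp: space_prob_algebra)
  have Km: "(\<lambda>\<omega>. PiM {1..n} (\<lambda>_. \<nu> \<omega>)) \<in> M \<rightarrow>\<^sub>M subprob_algebra (PiM {1..n} (\<lambda>_. U01))"
    using measurable_compose[OF measurable_prob_algebraD[OF \<nu>m] measurable_emeasure_subprob_algebra]
    by (intro measurable_prob_algebraD measurable_PiM_prob_kernel) (auto simp: \<nu>p \<nu>s measurable_prob_algebraD)
  have "(\<lambda>\<omega>. \<lambda>i\<in>{1..n}. v i \<omega>) \<in> M \<rightarrow>\<^sub>M PiM {1..n} (\<lambda>_. U01)"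
    using C by (intro measurable_restrict) (auto simp: cond_iid_given_measure_def)
  then have "(\<integral>\<^sup>+\<omega>. H (\<lambda>i\<in>{1..n}. v i \<omega>) \<partial>M)
      = (\<integral>\<^sup>+x. H x \<partial>distr M (PiM {1..n} (\<lambda>_. U01)) (\<lambda>\<omega>. \<lambda>i\<in>{1..n}. v i \<omega>))"
    using H by (simp add: nn_integral_distr)
  also have "\<dots> = (\<integral>\<^sup>+\<omega>. \<integral>\<^sup>+x. H x \<partial>PiM {1..n} (\<lambda>_. \<nu> \<omega>) \<partial>M)"
    unfolding distr_cond_iid_given_measure[OF M \<nu>m C] using H Km by (rule nn_integral_bind)
  finally show ?thesis .
qed

section \<open>The species sampling measure as a labelled mixture\<close>

definition mixture_weight :: "(nat \<Rightarrow> real) \<Rightarrow> nat \<Rightarrow> ennreal" where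
  "mixture_weight pv c = (case c of 0 \<Rightarrow> ennreal (1 - suminf pv) | Suc j \<Rightarrow> ennreal (pv j))"

definition mixture_component :: "real measure \<Rightarrow> (nat \<Rightarrow> real) \<Rightarrow> nat \<Rightarrow> real measure" where
  "mixture_component \<nu>0 \<eta> c = (case c of 0 \<Rightarrow> \<nu>0 | Suc j \<Rightarrow> return U01 (\<eta> j))"

lemma
  assumes "diffuse_base \<nu>0" "\<And>j. \<eta> j \<in> {0..1}"
  shows prob_space_mixture_component: "prob_space (mixture_component \<nu>0 \<eta> c)"
    and sets_mixture_component: "sets (mixture_component \<nu>0 \<eta> c) = sets U01"
  using assms diffuse_base_prob_space[OF assms(1)] sets_diffuse_base[OF assms(1)]
  by (auto simp: mixture_component_def intro!: prob_space_return split: nat.split)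

lemma nn_integral_mixture_component_Suc:
  assumes "\<eta> j \<in> {0..1}" "g \<in> borel_measurable borel"
  shows "(\<integral>\<^sup>+y. g y \<partial>mixture_component \<nu>0 \<eta> (Suc j)) = g (\<eta> j)"
  using assms by (simp add: mixture_component_def nn_integral_return borel_measurable_U01)

lemma borel_measurable_nn_integral_mixture_component:
  assumes \<eta>m: "\<And>j. \<eta> j \<in> M \<rightarrow>\<^sub>M U01" and g: "g \<in> borel_measurable borel"
  shows "(\<lambda>\<omega>. \<integral>\<^sup>+y. g y \<partial>mixture_component \<nu>0 (\<lambda>j. \<eta> j \<omega>) c) \<in> borel_measurable M"
proof (cases c)
  case (Suc j)
  have "(\<lambda>\<omega>. g (\<eta> j \<omega>)) \<in> borel_measurable M"
    using measurable_compose[OF \<eta>m borel_measurable_U01[OF g]] .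
  then show ?thesis
    using Suc measurable_space[OF \<eta>m] g
    by (subst measurable_cong[where g="\<lambda>\<omega>. g (\<eta> j \<omega>)"]) (auto simp: nn_integral_mixture_component_Suc)
qed (simp add: mixture_component_def)

lemma suminf_mixture_weight:
  fixes f :: "nat \<Rightarrow> ennreal"
  shows "(\<Sum>c. mixture_weight pv c * f c) = ennreal (1 - suminf pv) * f 0 + (\<Sum>j. ennreal (pv j) * f (Suc j))"
  using suminf_offset[of "\<lambda>c. mixture_weight pv c * f c" 1]
  by (simp add: mixture_weight_def summableI add.commute)

lemma prob_space_mixture_weight:
  assumes "\<And>j. 0 \<le> pv j" "summable pv" "suminf pv \<le> 1"
  shows "prob_space (density (count_space UNIV) (mixture_weight pv))"
proof
  have "emeasure (density (count_space UNIV) (mixture_weight pv)) UNIV = (\<Sum>c. mixture_weight pv c)"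
    by (simp add: emeasure_density nn_integral_count_space_nat)
  also have "\<dots> = ennreal (1 - suminf pv) + ennreal (suminf pv)"
    using assms suminf_mixture_weight[of pv "\<lambda>_. 1"] by (simp add: suminf_ennreal2)
  also have "\<dots> = 1"
    using assms by (subst ennreal_plus[symmetric]) (auto intro: suminf_nonneg)
  finally show "emeasure (density (count_space UNIV) (mixture_weight pv))
      (space (density (count_space UNIV) (mixture_weight pv))) = 1" by simp
qed

lemma borel_measurable_mixture_weight:
  "(\<lambda>pv. mixture_weight pv c) \<in> borel_measurable (PiM UNIV (\<lambda>_::nat. (borel :: real measure)))"
proof -
  have "(\<lambda>pv::nat \<Rightarrow> real. suminf pv) \<in> borel_measurable (PiM UNIV (\<lambda>_. borel))"
    by (rule borel_measurable_suminf) simp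
  then show ?thesis by (simp add: mixture_weight_def split: nat.split)
qed

lemma species_sampling_measure_eq_bind:
  assumes \<nu>0: "diffuse_base \<nu>0" and \<eta>: "\<And>j. \<eta> j \<in> {0..1}"
    and pv: "\<And>j. 0 \<le> pv j" "summable pv" "suminf pv \<le> 1"
    and \<mu>: "\<mu> \<in> space (prob_algebra U01)"
    and eq: "\<forall>B\<in>sets U01. measure \<mu> B = (\<Sum>j. pv j * indicator B (\<eta> j)) + (1 - suminf pv) * measure \<nu>0 B"
  shows "\<mu> = bind (density (count_space UNIV) (mixture_weight pv)) (mixture_component \<nu>0 \<eta>)"
proof (rule measure_eqI)
  interpret \<mu>: prob_space \<mu> using \<mu> by (simp add: space_prob_algebra)
  interpret \<nu>0: prob_space \<nu>0 using \<nu>0 by (rule diffuse_base_prob_space)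
  have \<mu>s: "sets \<mu> = sets U01" using \<mu> by (simp add: space_prob_algebra)
  show "sets \<mu> = sets (bind (density (count_space UNIV) (mixture_weight pv)) (mixture_component \<nu>0 \<eta>))"
    by (subst sets_bind[where N=U01]) (auto simp: \<mu>s sets_mixture_component[OF \<nu>0 \<eta>])
  fix B assume "B \<in> sets \<mu>"
  then have B: "B \<in> sets U01" by (simp add: \<mu>s)
  have sm: "summable (\<lambda>j. pv j * indicator B (\<eta> j))"
    by (rule summable_comparison_test'[OF pv(2), of 0]) (auto simp: pv(1) indicator_def)
  have "ennreal (\<Sum>j. pv j * indicator B (\<eta> j)) = (\<Sum>j. ennreal (pv j) * indicator B (\<eta> j))"
    using sm pv by (subst suminf_ennreal2[symmetric]) (auto simp: indicator_def intro!: suminf_cong)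
  moreover have "ennreal ((1 - suminf pv) * measure \<nu>0 B) = ennreal (1 - suminf pv) * emeasure \<nu>0 B"
    using pv by (simp add: ennreal_mult \<nu>0.emeasure_eq_measure)
  moreover have "0 \<le> (1 - suminf pv) * measure \<nu>0 B" "0 \<le> (\<Sum>j. pv j * indicator B (\<eta> j))"
    using pv sm by (auto intro!: suminf_nonneg)
  ultimately have "emeasure \<mu> B = ennreal (1 - suminf pv) * emeasure \<nu>0 B + (\<Sum>j. ennreal (pv j) * indicator B (\<eta> j))"
    using eq B by (simp add: \<mu>.emeasure_eq_measure ennreal_plus add.commute)
  also have "\<dots> = (\<Sum>c. mixture_weight pv c * emeasure (mixture_component \<nu>0 \<eta> c) B)"
    using B \<eta> by (simp add: suminf_mixture_weight mixture_component_def emeasure_return singleton_sets_U01)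
  also have "\<dots> = emeasure (bind (density (count_space UNIV) (mixture_weight pv)) (mixture_component \<nu>0 \<eta>)) B"
    using B prob_space_mixture_component[OF \<nu>0 \<eta>] sets_mixture_component[OF \<nu>0 \<eta>]
    by (simp add: emeasure_bind_density_count_space prob_space_imp_subprob_space nn_integral_count_space_nat)
  finally show "emeasure \<mu> B = emeasure (bind (density (count_space UNIV) (mixture_weight pv)) (mixture_component \<nu>0 \<eta>)) B" .
qed

section \<open>Tie partitions\<close>

definition tie_partition :: "'i set \<Rightarrow> ('i \<Rightarrow> 'b) \<Rightarrow> 'i set set \<Rightarrow> bool" where
  "tie_partition I x P \<longleftrightarrow> (\<forall>i\<in>I. \<forall>j\<in>I. (x i = x j) \<longleftrightarrow> (\<exists>A\<in>P. i \<in> A \<and> j \<in> A))"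

text \<open>The ties shown almost surely by draws from the labelled mixture components: a draw with
  label \<open>0\<close> comes from the diffuse base measure and never ties.\<close>
definition label_partition :: "'i set \<Rightarrow> ('i \<Rightarrow> nat) \<Rightarrow> 'i set set \<Rightarrow> bool" where
  "label_partition I \<sigma> P \<longleftrightarrow>
     (\<forall>i\<in>I. \<forall>j\<in>I. (i = j \<or> (\<sigma> i = \<sigma> j \<and> \<sigma> i \<noteq> 0)) \<longleftrightarrow> (\<exists>A\<in>P. i \<in> A \<and> j \<in> A))"

lemma tie_partition_unique:
  "{P. partition_on I P \<and> tie_partition I x P} = {I // {(i, j) \<in> I \<times> I. x i = x j}}"
proof -
  define R where "R = {(i, j) \<in> I \<times> I. x i = x j}"
  have R: "equiv I R"
    unfolding equiv_def refl_on_def sym_def trans_def R_def by auto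
  have "partition_on I (I // R)" using R by (rule partition_on_quotient)
  moreover have "tie_partition I x (I // R)"
    unfolding tie_partition_def
  proof (intro ballI iffI)
    fix i j assume ij: "i \<in> I" "j \<in> I" "x i = x j"
    then show "\<exists>A\<in>I // R. i \<in> A \<and> j \<in> A"
      by (intro bexI[of _ "R `` {i}"] quotientI) (auto simp: R_def)
  next
    fix i j assume "i \<in> I" "j \<in> I" "\<exists>A\<in>I // R. i \<in> A \<and> j \<in> A"
    then show "x i = x j" by (auto simp: quotient_def R_def)
  qed
  moreover have "P = I // R" if P: "partition_on I P" "tie_partition I x P" for P
  proof -
    have "{(i, j). \<exists>A\<in>P. i \<in> A \<and> j \<in> A} = R"
      using P unfolding R_def tie_partition_def partition_on_def by blast
    then show ?thesis using partition_on_eq_quotient[OF P(1)] by simp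
  qed
  ultimately show ?thesis unfolding R_def by blast
qed

lemma sum_tie_partition_indicator:
  assumes "finite I"
  shows "(\<Sum>P | partition_on I P. of_bool (tie_partition I x P) :: 'a :: semiring_1) = 1"
  using finitely_many_partition_on[OF assms]
  by (simp add: sum.inter_filter[symmetric] of_bool_def tie_partition_unique)

lemma pred_tie_partition:
  fixes X :: "'a \<Rightarrow> 'i \<Rightarrow> real"
  assumes "finite I" and "\<And>i. i \<in> I \<Longrightarrow> (\<lambda>\<omega>. X \<omega> i) \<in> borel_measurable M"
  shows "Measurable.pred M (\<lambda>\<omega>. tie_partition I (X \<omega>) P)"
  unfolding tie_partition_def
proof (intro pred_intros_finite[OF assms(1)])
  fix i j assume "i \<in> I" "j \<in> I"
  then have "Measurable.pred M (\<lambda>\<omega>. X \<omega> i = X \<omega> j)"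
    using assms(2) unfolding pred_def by (intro borel_measurable_eq) auto
  then show "Measurable.pred M (\<lambda>\<omega>. (X \<omega> i = X \<omega> j) \<longleftrightarrow> (\<exists>A\<in>P. i \<in> A \<and> j \<in> A))"
    by (intro pred_intros_logic) auto
qed

lemma nn_integral_sum_tie_partitions:
  fixes X :: "'a \<Rightarrow> 'i \<Rightarrow> 'b"
  assumes I: "finite I" and f: "f \<in> borel_measurable M"
    and X: "\<And>P. Measurable.pred M (\<lambda>\<omega>. tie_partition I (X \<omega>) P)"
  shows "(\<integral>\<^sup>+\<omega>. f \<omega> \<partial>M) = (\<Sum>P | partition_on I P. \<integral>\<^sup>+\<omega>. f \<omega> * indicator {\<omega>. tie_partition I (X \<omega>) P} \<omega> \<partial>M)"
proof -
  have "(\<integral>\<^sup>+\<omega>. f \<omega> \<partial>M) = (\<integral>\<^sup>+\<omega>. (\<Sum>P | partition_on I P. f \<omega> * indicator {\<omega>. tie_partition I (X \<omega>) P} \<omega>) \<partial>M)"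
    by (intro nn_integral_cong) (simp add: sum_distrib_left[symmetric] indicator_def sum_tie_partition_indicator[OF I])
  also have "\<dots> = (\<Sum>P | partition_on I P. \<integral>\<^sup>+\<omega>. f \<omega> * indicator {\<omega>. tie_partition I (X \<omega>) P} \<omega> \<partial>M)"
  proof (rule nn_integral_sum)
    fix P
    have "(\<lambda>\<omega>. indicator {\<omega>. tie_partition I (X \<omega>) P} \<omega> :: ennreal) \<in> borel_measurable M"
      using X[of P] by (simp add: pred_def indicator_def)
    then show "(\<lambda>\<omega>. f \<omega> * indicator {\<omega>. tie_partition I (X \<omega>) P} \<omega>) \<in> borel_measurable M"
      using f by (rule borel_measurable_times_ennreal[rotated])
  qed
  finally show ?thesis .
qed

lemma AE_PiM_mixture_component_ties:
  fixes \<sigma> :: "'i \<Rightarrow> nat"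
  assumes \<nu>0: "diffuse_base \<nu>0" and \<eta>: "\<And>j. \<eta> j \<in> {0..1}" "inj \<eta>" and I: "finite I"
  shows "AE x in PiM I (\<lambda>i. mixture_component \<nu>0 \<eta> (\<sigma> i)).
           \<forall>i\<in>I. \<forall>j\<in>I. (x i = x j) \<longleftrightarrow> (i = j \<or> (\<sigma> i = \<sigma> j \<and> \<sigma> i \<noteq> 0))"
proof -
  let ?L = "\<lambda>i. mixture_component \<nu>0 \<eta> (\<sigma> i)"
  have Lp: "\<And>i. prob_space (?L i)" and Ls: "\<And>i. sets (?L i) = sets U01"
    using prob_space_mixture_component[OF \<nu>0 \<eta>(1)] sets_mixture_component[OF \<nu>0 \<eta>(1)] by auto
  interpret product_prob_space ?L using Lp by (rule product_prob_spaceI)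
  have atom: "AE x in PiM I ?L. x i = \<eta> a" if "i \<in> I" "\<sigma> i = Suc a" for i a
  proof (rule AE_PiM_component[OF Lp that(1)])
    have "Measurable.pred U01 (\<lambda>y. y = \<eta> a)"
      using \<eta>(1)[of a] by (intro pred_eq_const1[OF measurable_ident_sets[OF refl]]) (simp add: singleton_sets_U01)
    moreover have L: "?L i = return U01 (\<eta> a)" by (simp add: mixture_component_def that(2))
    ultimately show "AE y in ?L i. y = \<eta> a"
      unfolding L using AE_return[of "\<eta> a" U01 "\<lambda>y. y = \<eta> a"] \<eta>(1)[of a] by simp
  qed
  have fresh: "AE x in PiM I ?L. x i \<noteq> x j" if "i \<in> I" "j \<in> I" "i \<noteq> j" "\<sigma> i = 0" for i j
    using that \<nu>0 Ls I by (intro AE_PiM_neq_diffuse product_prob_spaceI Lp)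
      (auto simp: mixture_component_def diffuse_base_def)
  show ?thesis
  proof (intro eventually_ball_finite[OF I] ballI)
    fix i j assume ij: "i \<in> I" "j \<in> I"
    show "AE x in PiM I ?L. (x i = x j) \<longleftrightarrow> (i = j \<or> (\<sigma> i = \<sigma> j \<and> \<sigma> i \<noteq> 0))"
    proof (cases "i = j")
      case False
      consider "\<sigma> i = 0" | "\<sigma> j = 0" | a b where "\<sigma> i = Suc a" "\<sigma> j = Suc b"
        by (meson not0_implies_Suc)
      then show ?thesis
      proof cases
        case 1
        from fresh[OF ij False 1] show ?thesis by eventually_elim (use 1 False in auto)
      next
        case 2
        from fresh[OF ij(2,1) not_sym[OF False] 2] show ?thesis by eventually_elim (use 2 in auto)
      next
        case 3
        from atom[OF ij(1) 3(1)] atom[OF ij(2) 3(2)] show ?thesis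
          by eventually_elim (use 3 False \<eta>(2) in \<open>auto dest: injD\<close>)
      qed
    qed simp
  qed
qed

lemma nn_integral_tie_partition_PiM_mixture_components:
  fixes \<sigma> :: "'i \<Rightarrow> nat" and g :: "'i \<Rightarrow> real \<Rightarrow> ennreal"
  assumes \<nu>0: "diffuse_base \<nu>0" and \<eta>: "\<And>j. \<eta> j \<in> {0..1}" "inj \<eta>" and I: "finite I"
    and g: "\<And>i. i \<in> I \<Longrightarrow> g i \<in> borel_measurable borel"
  shows "(\<integral>\<^sup>+x. (\<Prod>i\<in>I. g i (x i)) * indicator {x. tie_partition I x P} x
            \<partial>PiM I (\<lambda>i. mixture_component \<nu>0 \<eta> (\<sigma> i)))
       = (if label_partition I \<sigma> P then \<Prod>i\<in>I. \<integral>\<^sup>+y. g i y \<partial>mixture_component \<nu>0 \<eta> (\<sigma> i) else 0)"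
proof -
  let ?L = "\<lambda>i. mixture_component \<nu>0 \<eta> (\<sigma> i)"
  interpret product_prob_space ?L
    using prob_space_mixture_component[OF \<nu>0 \<eta>(1)] by (rule product_prob_spaceI)
  have gm: "i \<in> I \<Longrightarrow> g i \<in> borel_measurable (?L i)" for i
    using g[of i] by (simp add: measurable_cong_sets[OF sets_mixture_component[OF \<nu>0 \<eta>(1)] refl] borel_measurable_U01)
  have "(\<integral>\<^sup>+x. (\<Prod>i\<in>I. g i (x i)) * indicator {x. tie_partition I x P} x \<partial>PiM I ?L)
      = (\<integral>\<^sup>+x. (\<Prod>i\<in>I. g i (x i)) * of_bool (label_partition I \<sigma> P) \<partial>PiM I ?L)"
  proof (rule nn_integral_cong_AE)
    show "AE x in PiM I ?L. (\<Prod>i\<in>I. g i (x i)) * indicator {x. tie_partition I x P} x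
        = (\<Prod>i\<in>I. g i (x i)) * of_bool (label_partition I \<sigma> P)"
      using AE_PiM_mixture_component_ties[OF \<nu>0 \<eta> I, of \<sigma>]
      by eventually_elim (simp add: tie_partition_def label_partition_def indicator_def)
  qed
  also have "\<dots> = (if label_partition I \<sigma> P then \<Prod>i\<in>I. \<integral>\<^sup>+y. g i y \<partial>?L i else 0)"
    using product_nn_integral_prod[OF I gm] by simp
  finally show ?thesis .
qed

lemma borel_measurable_prod_tie_indicator:
  fixes g :: "'i \<Rightarrow> real \<Rightarrow> ennreal"
  assumes I: "finite I" and g: "\<And>i. i \<in> I \<Longrightarrow> g i \<in> borel_measurable borel"
  shows "(\<lambda>x. (\<Prod>i\<in>I. g i (x i)) * indicator {x. tie_partition I x P} x) \<in> borel_measurable (PiM I (\<lambda>_. U01))"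
proof (rule borel_measurable_times_ennreal)
  show "(\<lambda>x. \<Prod>i\<in>I. g i (x i)) \<in> borel_measurable (PiM I (\<lambda>_. U01))"
    using g by (intro borel_measurable_prod_ennreal measurable_compose[OF borel_measurable_component_U01]) auto
  have "Measurable.pred (PiM I (\<lambda>_. U01)) (\<lambda>x. tie_partition I x P)"
    using I by (intro pred_tie_partition borel_measurable_component_U01) auto
  then show "(\<lambda>x. indicator {x. tie_partition I x P} x :: ennreal) \<in> borel_measurable (PiM I (\<lambda>_. U01))"
    by (simp add: pred_def indicator_def)
qed

lemma nn_integral_tie_partition_PiM_mixture:
  fixes g :: "'i \<Rightarrow> real \<Rightarrow> ennreal"
  assumes \<nu>0: "diffuse_base \<nu>0" and \<eta>: "\<And>j. \<eta> j \<in> {0..1}" "inj \<eta>"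
    and pv: "\<And>j. 0 \<le> pv j" "summable pv" "suminf pv \<le> 1"
    and I: "finite I" and g: "\<And>i. i \<in> I \<Longrightarrow> g i \<in> borel_measurable borel"
  shows "(\<integral>\<^sup>+x. (\<Prod>i\<in>I. g i (x i)) * indicator {x. tie_partition I x P} x
            \<partial>PiM I (\<lambda>_. bind (density (count_space UNIV) (mixture_weight pv)) (mixture_component \<nu>0 \<eta>)))
       = (\<integral>\<^sup>+\<sigma>. (\<Prod>i\<in>I. mixture_weight pv (\<sigma> i)) *
            (if label_partition I \<sigma> P then \<Prod>i\<in>I. \<integral>\<^sup>+y. g i y \<partial>mixture_component \<nu>0 \<eta> (\<sigma> i) else 0)
          \<partial>count_space (PiE I (\<lambda>_. UNIV)))"
proof -
  define D where "D = density (count_space (PiE I (\<lambda>_. UNIV))) (\<lambda>\<sigma>. \<Prod>i\<in>I. mixture_weight pv (\<sigma> i))"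
  define K where "K \<sigma> = PiM I (\<lambda>i. mixture_component \<nu>0 \<eta> (\<sigma> i))" for \<sigma>
  have kp: "\<And>c. prob_space (mixture_component \<nu>0 \<eta> c)"
    and ks: "\<And>c. sets (mixture_component \<nu>0 \<eta> c) = sets U01"
    using prob_space_mixture_component[OF \<nu>0 \<eta>(1)] sets_mixture_component[OF \<nu>0 \<eta>(1)] by auto
  have Km: "K \<in> D \<rightarrow>\<^sub>M subprob_algebra (PiM I (\<lambda>_. U01))"
    unfolding D_def K_def using kp ks
    by (subst measurable_cong_sets[OF sets_density refl])
       (auto simp: measurable_count_space_eq1 space_subprob_algebra
         intro!: prob_space_imp_subprob_space prob_space_PiM sets_PiM_cong)
  note H = borel_measurable_prod_tie_indicator[OF I g]
  have "PiM I (\<lambda>_. bind (density (count_space UNIV) (mixture_weight pv)) (mixture_component \<nu>0 \<eta>)) = bind D K"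
    unfolding D_def K_def using kp ks prob_space_mixture_weight[OF pv]
    by (rule PiM_bind_discrete_mixture[OF I])
  moreover have "(\<integral>\<^sup>+x. (\<Prod>i\<in>I. g i (x i)) * indicator {x. tie_partition I x P} x \<partial>bind D K)
      = (\<integral>\<^sup>+\<sigma>. \<integral>\<^sup>+x. (\<Prod>i\<in>I. g i (x i)) * indicator {x. tie_partition I x P} x \<partial>K \<sigma> \<partial>D)"
    using H Km by (rule nn_integral_bind)
  moreover have "\<dots> = (\<integral>\<^sup>+\<sigma>. (\<Prod>i\<in>I. mixture_weight pv (\<sigma> i)) *
      (\<integral>\<^sup>+x. (\<Prod>i\<in>I. g i (x i)) * indicator {x. tie_partition I x P} x \<partial>K \<sigma>) \<partial>count_space (PiE I (\<lambda>_. UNIV)))"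
    unfolding D_def by (rule nn_integral_density) auto
  ultimately show ?thesis
    by (simp add: K_def nn_integral_tie_partition_PiM_mixture_components[OF \<nu>0 \<eta> I g])
qed

section \<open>Moments of a species sampling process\<close>

definition block_label :: "('i \<Rightarrow> nat) \<Rightarrow> 'i set \<Rightarrow> nat" where
  "block_label \<sigma> A = \<sigma> (SOME i. i \<in> A)"

lemma label_partition_same_block:
  assumes "label_partition I \<sigma> P" "partition_on I P" "A \<in> P" "i \<in> A" "j \<in> A"
  shows "i = j \<or> (\<sigma> i = \<sigma> j \<and> \<sigma> i \<noteq> 0)"
  using assms unfolding label_partition_def partition_on_def by blast

lemma prod_block_mixture_component:
  assumes L: "label_partition I \<sigma> P" and P: "partition_on I P" and A: "A \<in> P"
    and \<eta>: "\<And>j. \<eta> j \<in> {0..1}" and g: "\<And>i. i \<in> A \<Longrightarrow> g i \<in> borel_measurable borel"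
  shows "(\<Prod>i\<in>A. \<integral>\<^sup>+y. g i y \<partial>mixture_component \<nu>0 \<eta> (\<sigma> i))
    = (if block_label \<sigma> A = 0 then \<integral>\<^sup>+x. (\<Prod>i\<in>A. g i x) \<partial>\<nu>0
       else \<Prod>i\<in>A. g i (\<eta> (block_label \<sigma> A - 1)))"
proof -
  define a where "a = (SOME i. i \<in> A)"
  have "A \<noteq> {}" using P A by (auto simp: partition_on_def)
  then have a: "a \<in> A" unfolding a_def by (simp add: some_in_eq)
  have same: "i = a \<or> (\<sigma> i = \<sigma> a \<and> \<sigma> i \<noteq> 0)" if "i \<in> A" for i
    using label_partition_same_block[OF L P A that a] .
  show ?thesis
  proof (cases "\<sigma> a")
    case 0
    then have "i = a" if "i \<in> A" for i using same[OF that] by auto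
    then have "A = {a}" using a by blast
    then show ?thesis using 0 by (simp add: block_label_def a_def[symmetric] mixture_component_def)
  next
    case (Suc j)
    then have "\<sigma> i = Suc j" if "i \<in> A" for i using same[OF that] by auto
    then show ?thesis
      using Suc \<eta> g by (simp add: block_label_def a_def[symmetric] nn_integral_mixture_component_Suc)
  qed
qed

lemma prod_nn_integral_mixture_components:
  assumes L: "label_partition I \<sigma> P" and P: "partition_on I P" and I: "finite I"
    and \<eta>: "\<And>j. \<eta> j \<in> {0..1}" and g: "\<And>i. i \<in> I \<Longrightarrow> g i \<in> borel_measurable borel"
  shows "(\<Prod>i\<in>I. \<integral>\<^sup>+y. g i y \<partial>mixture_component \<nu>0 \<eta> (\<sigma> i))
    = (\<Prod>A\<in>P \<inter> {A. block_label \<sigma> A = 0}. \<integral>\<^sup>+x. (\<Prod>i\<in>A. g i x) \<partial>\<nu>0)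
      * (\<Prod>A\<in>P \<inter> - {A. block_label \<sigma> A = 0}. \<Prod>i\<in>A. g i (\<eta> (block_label \<sigma> A - 1)))"
proof -
  have "(\<Prod>i\<in>I. \<integral>\<^sup>+y. g i y \<partial>mixture_component \<nu>0 \<eta> (\<sigma> i))
      = (\<Prod>A\<in>P. \<Prod>i\<in>A. \<integral>\<^sup>+y. g i y \<partial>mixture_component \<nu>0 \<eta> (\<sigma> i))"
    by (rule prod.partition[OF I P])
  also have "\<dots> = (\<Prod>A\<in>P. if block_label \<sigma> A = 0 then \<integral>\<^sup>+x. (\<Prod>i\<in>A. g i x) \<partial>\<nu>0
      else \<Prod>i\<in>A. g i (\<eta> (block_label \<sigma> A - 1)))"
    using P g \<eta> by (intro prod.cong refl prod_block_mixture_component[OF L P]) (auto simp: partition_on_def)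
  also have "\<dots> = (\<Prod>A\<in>P \<inter> {A. block_label \<sigma> A = 0}. \<integral>\<^sup>+x. (\<Prod>i\<in>A. g i x) \<partial>\<nu>0)
      * (\<Prod>A\<in>P \<inter> - {A. block_label \<sigma> A = 0}. \<Prod>i\<in>A. g i (\<eta> (block_label \<sigma> A - 1)))"
    using I P by (intro prod.If_cases finite_elements)
  finally show ?thesis .
qed

lemma inj_on_block_label:
  assumes L: "label_partition I \<sigma> P" and P: "partition_on I P"
  shows "inj_on (\<lambda>A. block_label \<sigma> A - 1) (P \<inter> - {A. block_label \<sigma> A = 0})"
proof (rule inj_onI)
  fix A B assume A: "A \<in> P \<inter> - {A. block_label \<sigma> A = 0}" and B: "B \<in> P \<inter> - {A. block_label \<sigma> A = 0}"
    and eq: "block_label \<sigma> A - 1 = block_label \<sigma> B - 1"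
  define a b where "a = (SOME i. i \<in> A)" and "b = (SOME i. i \<in> B)"
  have "a \<in> A" "b \<in> B"
    using A B P unfolding a_def b_def partition_on_def by (metis (mono_tags) IntD1 ex_in_conv someI_ex)+
  moreover have "\<sigma> a = \<sigma> b" "\<sigma> a \<noteq> 0" using A B eq by (auto simp: block_label_def a_def b_def)
  ultimately obtain C where "C \<in> P" "a \<in> C" "b \<in> C"
    using L A B P unfolding label_partition_def partition_on_def by blast
  then show "A = B"
    using \<open>a \<in> A\<close> \<open>b \<in> B\<close> A B P unfolding partition_on_def disjoint_def by blast
qed

text \<open>Blocks with label \<open>0\<close> are singletons and contribute their \<open>\<nu>0\<close>-integral directly; the
  others sit on distinct atoms, which are i.i.d. \<open>\<nu>0\<close> and independent of the weights.\<close>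
lemma nn_integral_label_partition_factor:
  fixes M :: "'a measure" and p \<eta> :: "nat \<Rightarrow> 'a \<Rightarrow> real" and g :: "'i \<Rightarrow> real \<Rightarrow> ennreal"
  assumes M: "prob_space M"
    and ind: "prob_space.indep_var M (PiM UNIV (\<lambda>_. borel)) (\<lambda>\<omega> j. p j \<omega>) (PiM UNIV (\<lambda>_. U01)) (\<lambda>\<omega> j. \<eta> j \<omega>)"
    and ind\<eta>: "prob_space.indep_vars M (\<lambda>_. U01) \<eta> UNIV"
    and \<eta>m: "\<And>j. \<eta> j \<in> M \<rightarrow>\<^sub>M U01" and \<eta>d: "\<And>j. distr M U01 (\<eta> j) = \<nu>0"
    and I: "finite I" and P: "partition_on I P" and L: "label_partition I \<sigma> P"
    and g: "\<And>i. i \<in> I \<Longrightarrow> g i \<in> borel_measurable borel"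
  shows "(\<integral>\<^sup>+\<omega>. (\<Prod>i\<in>I. mixture_weight (\<lambda>j. p j \<omega>) (\<sigma> i)) *
            (\<Prod>i\<in>I. \<integral>\<^sup>+y. g i y \<partial>mixture_component \<nu>0 (\<lambda>j. \<eta> j \<omega>) (\<sigma> i)) \<partial>M)
       = (\<integral>\<^sup>+\<omega>. (\<Prod>i\<in>I. mixture_weight (\<lambda>j. p j \<omega>) (\<sigma> i)) \<partial>M) * (\<Prod>A\<in>P. \<integral>\<^sup>+x. (\<Prod>i\<in>A. g i x) \<partial>\<nu>0)"
proof -
  interpret prob_space M by fact
  define G where "G A x = (\<Prod>i\<in>A. g i x)" for A x
  define P0 where "P0 = P \<inter> {A. block_label \<sigma> A = 0}"
  define P1 where "P1 = P \<inter> - {A. block_label \<sigma> A = 0}"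
  define C0 where "C0 = (\<Prod>A\<in>P0. \<integral>\<^sup>+x. G A x \<partial>\<nu>0)"
  define W where "W \<omega> = (\<Prod>i\<in>I. mixture_weight (\<lambda>j. p j \<omega>) (\<sigma> i))" for \<omega>
  define B where "B \<omega> = (\<Prod>A\<in>P1. G A (\<eta> (block_label \<sigma> A - 1) \<omega>))" for \<omega>
  have finP: "finite P" using I P by (rule finite_elements)
  have Gm: "A \<in> P \<Longrightarrow> G A \<in> borel_measurable borel" for A
    unfolding G_def using P g by (intro borel_measurable_prod_ennreal) (auto simp: partition_on_def)
  have Wm: "(\<lambda>pv. \<Prod>i\<in>I. mixture_weight pv (\<sigma> i)) \<in> borel_measurable (PiM UNIV (\<lambda>_::nat. borel :: real measure))"
    by (intro borel_measurable_prod_ennreal borel_measurable_mixture_weight)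
  have Bm: "(\<lambda>e. \<Prod>A\<in>P1. G A (e (block_label \<sigma> A - 1))) \<in> borel_measurable (PiM UNIV (\<lambda>_::nat. U01))"
    using Gm by (intro borel_measurable_prod_ennreal measurable_compose[OF borel_measurable_component_U01])
      (auto simp: P1_def)
  have "(\<integral>\<^sup>+\<omega>. W \<omega> * (\<Prod>i\<in>I. \<integral>\<^sup>+y. g i y \<partial>mixture_component \<nu>0 (\<lambda>j. \<eta> j \<omega>) (\<sigma> i)) \<partial>M)
      = (\<integral>\<^sup>+\<omega>. C0 * (W \<omega> * B \<omega>) \<partial>M)"
    using measurable_space[OF \<eta>m] g
    by (intro nn_integral_cong) (simp add: prod_nn_integral_mixture_components[OF L P I] C0_def P0_def B_def P1_def G_def mult_ac)
  also have "\<dots> = C0 * ((\<integral>\<^sup>+\<omega>. W \<omega> \<partial>M) * (\<integral>\<^sup>+\<omega>. B \<omega> \<partial>M))"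
    using indep_var_nn_integral_mult[OF M ind Wm Bm] measurable_compose[OF indep_var_rv1[OF ind] Wm]
      measurable_compose[OF indep_var_rv2[OF ind] Bm]
    by (subst nn_integral_cmult) (auto simp: W_def[abs_def] B_def[abs_def])
  also have "(\<integral>\<^sup>+\<omega>. B \<omega> \<partial>M) = (\<Prod>A\<in>P1. \<integral>\<^sup>+x. G A x \<partial>\<nu>0)"
    unfolding B_def using Gm finP inj_on_block_label[OF L P]
    by (intro nn_integral_prod_iid_inj[OF M ind\<eta> \<eta>m \<eta>d]) (auto simp: P1_def)
  also have "C0 * ((\<integral>\<^sup>+\<omega>. W \<omega> \<partial>M) * (\<Prod>A\<in>P1. \<integral>\<^sup>+x. G A x \<partial>\<nu>0))
      = (\<integral>\<^sup>+\<omega>. W \<omega> \<partial>M) * (\<Prod>A\<in>P. \<integral>\<^sup>+x. G A x \<partial>\<nu>0)"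
    using prod.If_cases[OF finP, of "\<lambda>A. block_label \<sigma> A = 0" "\<lambda>A. \<integral>\<^sup>+x. G A x \<partial>\<nu>0" "\<lambda>A. \<integral>\<^sup>+x. G A x \<partial>\<nu>0"]
    by (simp add: C0_def P0_def P1_def mult_ac)
  finally show ?thesis by (simp add: W_def G_def)
qed

definition label_partition_prob :: "'a measure \<Rightarrow> (nat \<Rightarrow> 'a \<Rightarrow> real) \<Rightarrow> 'i set \<Rightarrow> 'i set set \<Rightarrow> ennreal" where
  "label_partition_prob M p I P = (\<integral>\<^sup>+\<sigma>. of_bool (label_partition I \<sigma> P) *
     (\<integral>\<^sup>+\<omega>. (\<Prod>i\<in>I. mixture_weight (\<lambda>j. p j \<omega>) (\<sigma> i)) \<partial>M) \<partial>count_space (PiE I (\<lambda>_. UNIV)))"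

lemma AE_nn_integral_tie_partition_PiM_species_sampling:
  fixes \<nu> :: "'a \<Rightarrow> real measure" and g :: "'i \<Rightarrow> real \<Rightarrow> ennreal"
  assumes M: "prob_space M" and \<nu>0: "diffuse_base \<nu>0" and SS: "species_sampling M \<nu>0 p \<eta> \<nu>"
    and I: "finite I" and g: "\<And>i. i \<in> I \<Longrightarrow> g i \<in> borel_measurable borel"
  shows "AE \<omega> in M. (\<integral>\<^sup>+x. (\<Prod>i\<in>I. g i (x i)) * indicator {x. tie_partition I x P} x \<partial>PiM I (\<lambda>_. \<nu> \<omega>))
    = (\<integral>\<^sup>+\<sigma>. (\<Prod>i\<in>I. mixture_weight (\<lambda>j. p j \<omega>) (\<sigma> i)) *
         (if label_partition I \<sigma> P then \<Prod>i\<in>I. \<integral>\<^sup>+y. g i y \<partial>mixture_component \<nu>0 (\<lambda>j. \<eta> j \<omega>) (\<sigma> i) else 0)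
       \<partial>count_space (PiE I (\<lambda>_. UNIV)))"
proof -
  interpret prob_space M by fact
  from SS have \<eta>m: "\<And>j. \<eta> j \<in> M \<rightarrow>\<^sub>M U01" and \<nu>m: "\<nu> \<in> M \<rightarrow>\<^sub>M prob_algebra U01"
    and p: "AE \<omega> in M. (\<forall>j. 0 \<le> p j \<omega>) \<and> summable (\<lambda>j. p j \<omega>) \<and> (\<Sum>j. p j \<omega>) \<le> 1"
    and mix: "AE \<omega> in M. \<forall>B\<in>sets U01.
      measure (\<nu> \<omega>) B = (\<Sum>j. p j \<omega> * indicator B (\<eta> j \<omega>)) + (1 - (\<Sum>j. p j \<omega>)) * measure \<nu>0 B"
    unfolding species_sampling_def by auto
  have inj: "AE \<omega> in M. inj (\<lambda>j. \<eta> j \<omega>)"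
    using SS \<nu>0 unfolding species_sampling_def by (intro AE_inj_iid_diffuse[OF M]) auto
  show ?thesis
    using p mix inj AE_space
  proof eventually_elim
    case (elim \<omega>)
    have \<eta>01: "\<And>j. \<eta> j \<omega> \<in> {0..1}" using measurable_space[OF \<eta>m elim(4)] by simp
    have "\<nu> \<omega> = bind (density (count_space UNIV) (mixture_weight (\<lambda>j. p j \<omega>))) (mixture_component \<nu>0 (\<lambda>j. \<eta> j \<omega>))"
      using elim measurable_space[OF \<nu>m elim(4)] by (intro species_sampling_measure_eq_bind[OF \<nu>0 \<eta>01]) auto
    moreover have "\<And>j. 0 \<le> p j \<omega>" "summable (\<lambda>j. p j \<omega>)" "(\<Sum>j. p j \<omega>) \<le> 1"
      using elim(1) by auto
    ultimately show ?case
      by (simp only: nn_integral_tie_partition_PiM_mixture[OF \<nu>0 \<eta>01 elim(3) _ _ _ I g])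
  qed
qed

lemma nn_integral_tie_partition_species_sampling:
  fixes M :: "'a measure" and \<nu> :: "'a \<Rightarrow> real measure" and g :: "nat \<Rightarrow> real \<Rightarrow> ennreal"
  assumes M: "prob_space M" and \<nu>0: "diffuse_base \<nu>0"
    and SS: "species_sampling M \<nu>0 p \<eta> \<nu>" and C: "cond_iid_given_measure M \<nu> v"
    and P: "partition_on {1..k} P" and g: "\<And>i. i \<in> {1..k} \<Longrightarrow> g i \<in> borel_measurable borel"
  shows "(\<integral>\<^sup>+\<omega>. (\<Prod>i\<in>{1..k}. g i (v i \<omega>)) * indicator {\<omega>. tie_partition {1..k} (\<lambda>i. v i \<omega>) P} \<omega> \<partial>M)
       = label_partition_prob M p {1..k} P * (\<Prod>A\<in>P. \<integral>\<^sup>+x. (\<Prod>i\<in>A. g i x) \<partial>\<nu>0)"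
proof -
  interpret prob_space M by fact
  define I where "I = {1..k::nat}"
  have I: "finite I" by (simp add: I_def)
  from SS have \<eta>m: "\<And>j. \<eta> j \<in> M \<rightarrow>\<^sub>M U01"
    and ind\<eta>: "indep_vars (\<lambda>_. U01) \<eta> UNIV" and \<eta>d: "\<And>j. distr M U01 (\<eta> j) = \<nu>0"
    and ind: "indep_var (PiM UNIV (\<lambda>_. borel)) (\<lambda>\<omega> j. p j \<omega>) (PiM UNIV (\<lambda>_. U01)) (\<lambda>\<omega> j. \<eta> j \<omega>)"
    and \<nu>m: "\<nu> \<in> M \<rightarrow>\<^sub>M prob_algebra U01"
    unfolding species_sampling_def by auto
  define H where "H x = (\<Prod>i\<in>I. g i (x i)) * indicator {x. tie_partition I x P} x" for x :: "nat \<Rightarrow> real"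
  define F where "F \<sigma> \<omega> = (\<Prod>i\<in>I. mixture_weight (\<lambda>j. p j \<omega>) (\<sigma> i)) *
     (if label_partition I \<sigma> P then \<Prod>i\<in>I. \<integral>\<^sup>+y. g i y \<partial>mixture_component \<nu>0 (\<lambda>j. \<eta> j \<omega>) (\<sigma> i) else 0)"
    for \<sigma> \<omega>
  have "(\<integral>\<^sup>+\<omega>. (\<Prod>i\<in>I. g i (v i \<omega>)) * indicator {\<omega>. tie_partition I (\<lambda>i. v i \<omega>) P} \<omega> \<partial>M)
      = (\<integral>\<^sup>+\<omega>. H (\<lambda>i\<in>I. v i \<omega>) \<partial>M)"
    by (intro nn_integral_cong) (simp add: H_def tie_partition_def indicator_def)
  also have "\<dots> = (\<integral>\<^sup>+\<omega>. \<integral>\<^sup>+x. H x \<partial>PiM I (\<lambda>_. \<nu> \<omega>) \<partial>M)"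
    unfolding I_def H_def using borel_measurable_prod_tie_indicator[OF I g]
    by (intro nn_integral_cond_iid_given_measure[OF M \<nu>m C]) (simp add: I_def)
  also have "\<dots> = (\<integral>\<^sup>+\<omega>. \<integral>\<^sup>+\<sigma>. F \<sigma> \<omega> \<partial>count_space (PiE I (\<lambda>_. UNIV)) \<partial>M)"
    unfolding H_def F_def using g
    by (intro nn_integral_cong_AE AE_nn_integral_tie_partition_PiM_species_sampling[OF M \<nu>0 SS I]) (simp add: I_def)
  also have "\<dots> = (\<integral>\<^sup>+\<sigma>. \<integral>\<^sup>+\<omega>. F \<sigma> \<omega> \<partial>M \<partial>count_space (PiE I (\<lambda>_. UNIV)))"
  proof (rule nn_integral_count_space_nn_integral)
    show "countable (PiE I (\<lambda>_. UNIV :: nat set))" using I by (intro countable_PiE) auto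
    fix \<sigma> :: "nat \<Rightarrow> nat"
    have "(\<lambda>\<omega>. \<Prod>i\<in>I. mixture_weight (\<lambda>j. p j \<omega>) (\<sigma> i)) \<in> borel_measurable M"
      using indep_var_rv1[OF ind]
      by (intro borel_measurable_prod_ennreal measurable_compose[OF _ borel_measurable_mixture_weight]) auto
    moreover have "(\<lambda>\<omega>. \<Prod>i\<in>I. \<integral>\<^sup>+y. g i y \<partial>mixture_component \<nu>0 (\<lambda>j. \<eta> j \<omega>) (\<sigma> i)) \<in> borel_measurable M"
      using \<eta>m g by (intro borel_measurable_prod_ennreal borel_measurable_nn_integral_mixture_component) (auto simp: I_def)
    ultimately show "F \<sigma> \<in> borel_measurable M"
      unfolding F_def by (cases "label_partition I \<sigma> P") auto
  qed
  also have "\<dots> = (\<integral>\<^sup>+\<sigma>. of_bool (label_partition I \<sigma> P) *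
        (\<integral>\<^sup>+\<omega>. (\<Prod>i\<in>I. mixture_weight (\<lambda>j. p j \<omega>) (\<sigma> i)) \<partial>M) *
        (\<Prod>A\<in>P. \<integral>\<^sup>+x. (\<Prod>i\<in>A. g i x) \<partial>\<nu>0) \<partial>count_space (PiE I (\<lambda>_. UNIV)))"
  proof (rule nn_integral_cong)
    fix \<sigma> :: "nat \<Rightarrow> nat"
    show "(\<integral>\<^sup>+\<omega>. F \<sigma> \<omega> \<partial>M) = of_bool (label_partition I \<sigma> P) *
        (\<integral>\<^sup>+\<omega>. (\<Prod>i\<in>I. mixture_weight (\<lambda>j. p j \<omega>) (\<sigma> i)) \<partial>M) * (\<Prod>A\<in>P. \<integral>\<^sup>+x. (\<Prod>i\<in>A. g i x) \<partial>\<nu>0)"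
      using nn_integral_label_partition_factor[OF M ind ind\<eta> \<eta>m \<eta>d I P[folded I_def] _ g[folded I_def]]
      by (simp add: F_def)
  qed
  also have "\<dots> = label_partition_prob M p I P * (\<Prod>A\<in>P. \<integral>\<^sup>+x. (\<Prod>i\<in>A. g i x) \<partial>\<nu>0)"
    unfolding label_partition_prob_def by (rule nn_integral_multc) simp
  finally show ?thesis unfolding I_def .
qed

lemma label_partition_prob_eq_EPPF:
  fixes M :: "'a measure" and \<nu> :: "'a \<Rightarrow> real measure" and k :: nat
  assumes M: "prob_space M" and \<nu>0: "diffuse_base \<nu>0"
    and SS: "species_sampling M \<nu>0 p \<eta> \<nu>" and C: "cond_iid_given_measure M \<nu> v"
    and EP: "is_EPPF M v \<pi>" and k: "1 \<le> k" and P: "partition_on {1..k} P"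
  shows "label_partition_prob M p {1..k} P = ennreal (\<pi> (image_mset card (mset_set P)))"
proof -
  interpret prob_space M by fact
  interpret N0: prob_space \<nu>0 using \<nu>0 by (rule diffuse_base_prob_space)
  define T where "T = {\<omega>\<in>space M. tie_partition {1..k} (\<lambda>i. v i \<omega>) P}"
  have "T \<in> sets M"
    unfolding T_def using cond_iid_given_measure_U01(2)[OF C]
    by (intro pred_tie_partition[unfolded pred_def]) auto
  have "label_partition_prob M p {1..k} P = (\<integral>\<^sup>+\<omega>. indicator {\<omega>. tie_partition {1..k} (\<lambda>i. v i \<omega>) P} \<omega> \<partial>M)"
    using nn_integral_tie_partition_species_sampling[OF M \<nu>0 SS C P, of "\<lambda>_ _. 1"]
    by (simp add: N0.emeasure_space_1)
  also have "\<dots> = emeasure M T"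
  proof -
    have "{\<omega>. tie_partition {1..k} (\<lambda>i. v i \<omega>) P} \<inter> space M = T" by (auto simp: T_def)
    then show ?thesis using \<open>T \<in> sets M\<close> by (simp add: nn_integral_indicator')
  qed
  also have "\<dots> = ennreal (\<pi> (image_mset card (mset_set P)))"
    using EP k P by (simp add: emeasure_eq_measure is_EPPF_def T_def tie_partition_def)
  finally show ?thesis .
qed

lemma EPPF_nonneg:
  fixes k :: nat
  assumes "is_EPPF M v \<pi>" "1 \<le> k" "partition_on {1..k} P"
  shows "0 \<le> \<pi> (image_mset card (mset_set P))"
proof -
  have "0 \<le> measure M {\<omega>\<in>space M. tie_partition {1..k} (\<lambda>i. v i \<omega>) P}"
    by (rule measure_nonneg)
  also have "\<dots> = \<pi> (image_mset card (mset_set P))"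
    using assms by (simp add: is_EPPF_def tie_partition_def)
  finally show ?thesis .
qed

lemma nn_integral_tie_partition_EPPF:
  fixes M :: "'a measure" and \<nu> :: "'a \<Rightarrow> real measure" and k :: nat and f :: "nat \<Rightarrow> real \<Rightarrow> real"
  assumes M: "prob_space M" and \<nu>0: "diffuse_base \<nu>0"
    and SS: "species_sampling M \<nu>0 p \<eta> \<nu>" and C: "cond_iid_given_measure M \<nu> v"
    and EP: "is_EPPF M v \<pi>" and k: "1 \<le> k" and P: "partition_on {1..k} P"
    and f: "\<And>i. f i \<in> borel_measurable borel" and f01: "\<And>i x. x \<in> {0..1} \<Longrightarrow> 0 \<le> f i x \<and> f i x \<le> 1"
  shows "(\<integral>\<^sup>+\<omega>. (\<Prod>i\<in>{1..k}. ennreal (f i (v i \<omega>))) * indicator {\<omega>. tie_partition {1..k} (\<lambda>i. v i \<omega>) P} \<omega> \<partial>M)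
    = ennreal (\<pi> (image_mset card (mset_set P)) * (\<Prod>A\<in>P. \<integral>x. (\<Prod>i\<in>A. f i x) \<partial>\<nu>0))"
proof -
  have sp: "space \<nu>0 = {0..1}" using sets_eq_imp_space_eq[OF sets_diffuse_base[OF \<nu>0]] by simp
  have Q: "(\<integral>\<^sup>+x. (\<Prod>i\<in>A. ennreal (f i x)) \<partial>\<nu>0) = ennreal (\<integral>x. (\<Prod>i\<in>A. f i x) \<partial>\<nu>0)" for A
    using f f01 diffuse_base_prob_space[OF \<nu>0]
    by (intro nn_integral_prod_ennreal_unit_valued)
      (auto simp: sp measurable_cong_sets[OF sets_diffuse_base[OF \<nu>0] refl] borel_measurable_U01)
  have Q_nonneg: "0 \<le> (\<integral>x. (\<Prod>i\<in>A. f i x) \<partial>\<nu>0)" for A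
    using f01 by (intro integral_nonneg_AE AE_I2 prod_nonneg) (simp add: sp)
  have "(\<integral>\<^sup>+\<omega>. (\<Prod>i\<in>{1..k}. ennreal (f i (v i \<omega>))) * indicator {\<omega>. tie_partition {1..k} (\<lambda>i. v i \<omega>) P} \<omega> \<partial>M)
      = label_partition_prob M p {1..k} P * (\<Prod>A\<in>P. \<integral>\<^sup>+x. (\<Prod>i\<in>A. ennreal (f i x)) \<partial>\<nu>0)"
    using measurable_compose[OF f measurable_ennreal]
    by (intro nn_integral_tie_partition_species_sampling[OF M \<nu>0 SS C P]) simp
  also have "\<dots> = ennreal (\<pi> (image_mset card (mset_set P))) * (\<Prod>A\<in>P. ennreal (\<integral>x. (\<Prod>i\<in>A. f i x) \<partial>\<nu>0))"
    by (simp only: label_partition_prob_eq_EPPF[OF M \<nu>0 SS C EP k P] Q)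
  also have "\<dots> = ennreal (\<pi> (image_mset card (mset_set P)) * (\<Prod>A\<in>P. \<integral>x. (\<Prod>i\<in>A. f i x) \<partial>\<nu>0))"
    using EPPF_nonneg[OF EP k P] Q_nonneg by (simp add: prod_ennreal ennreal_mult prod_nonneg)
  finally show ?thesis .
qed

theorem integral_prod_species_sampling:
  fixes M :: "'a measure" and \<nu> :: "'a \<Rightarrow> real measure" and k :: nat and f :: "nat \<Rightarrow> real \<Rightarrow> real"
  assumes M: "prob_space M" and \<nu>0: "diffuse_base \<nu>0"
    and SS: "species_sampling M \<nu>0 p \<eta> \<nu>" and C: "cond_iid_given_measure M \<nu> v"
    and EP: "is_EPPF M v \<pi>" and k: "1 \<le> k"
    and f: "\<And>i. f i \<in> borel_measurable borel" and f01: "\<And>i x. x \<in> {0..1} \<Longrightarrow> 0 \<le> f i x \<and> f i x \<le> 1"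
  shows "(\<integral>\<omega>. (\<Prod>i\<in>{1..k}. f i (v i \<omega>)) \<partial>M)
    = (\<Sum>P | partition_on {1..k} P. \<pi> (image_mset card (mset_set P)) * (\<Prod>A\<in>P. \<integral>x. (\<Prod>i\<in>A. f i x) \<partial>\<nu>0))"
    (is "_ = (\<Sum>P | partition_on {1..k} P. ?S P)")
proof -
  interpret prob_space M by fact
  have sp: "space \<nu>0 = {0..1}" using sets_eq_imp_space_eq[OF sets_diffuse_base[OF \<nu>0]] by simp
  have fv: "(\<lambda>\<omega>. f i (v i \<omega>)) \<in> borel_measurable M" if "i \<in> {1..k}" for i
    using measurable_compose[OF cond_iid_given_measure_U01(2)[OF C] f] that by simp
  have fv01: "0 \<le> f i (v i \<omega>) \<and> f i (v i \<omega>) \<le> 1" if "i \<in> {1..k}" "\<omega> \<in> space M" for i \<omega>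
    using f01 measurable_space[OF cond_iid_given_measure_U01(1)[OF C] that(2)] that(1) by simp
  have Q_nonneg: "0 \<le> (\<integral>x. (\<Prod>i\<in>A. f i x) \<partial>\<nu>0)" for A
    using f01 by (intro integral_nonneg_AE AE_I2 prod_nonneg) (simp add: sp)
  have "ennreal (\<integral>\<omega>. (\<Prod>i\<in>{1..k}. f i (v i \<omega>)) \<partial>M) = (\<integral>\<^sup>+\<omega>. (\<Prod>i\<in>{1..k}. ennreal (f i (v i \<omega>))) \<partial>M)"
    using fv fv01 by (intro nn_integral_prod_ennreal_unit_valued[symmetric] prob_space_axioms)
  also have "\<dots> = (\<Sum>P | partition_on {1..k} P. \<integral>\<^sup>+\<omega>. (\<Prod>i\<in>{1..k}. ennreal (f i (v i \<omega>))) *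
      indicator {\<omega>. tie_partition {1..k} (\<lambda>i. v i \<omega>) P} \<omega> \<partial>M)"
  proof (rule nn_integral_sum_tie_partitions)
    show "(\<lambda>\<omega>. \<Prod>i\<in>{1..k}. ennreal (f i (v i \<omega>))) \<in> borel_measurable M"
      using fv by (intro borel_measurable_prod_ennreal measurable_compose[OF _ measurable_ennreal])
    show "Measurable.pred M (\<lambda>\<omega>. tie_partition {1..k} (\<lambda>i. v i \<omega>) P)" for P
      using cond_iid_given_measure_U01(2)[OF C] by (intro pred_tie_partition) auto
  qed simp
  also have "\<dots> = (\<Sum>P | partition_on {1..k} P. ennreal (?S P))"
    using nn_integral_tie_partition_EPPF[OF M \<nu>0 SS C EP k _ f f01] by simp
  also have "\<dots> = ennreal (\<Sum>P | partition_on {1..k} P. ?S P)"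
    using EPPF_nonneg[OF EP k] Q_nonneg by (intro sum_ennreal mult_nonneg_nonneg prod_nonneg) auto
  finally have "ennreal (\<integral>\<omega>. (\<Prod>i\<in>{1..k}. f i (v i \<omega>)) \<partial>M) = ennreal (\<Sum>P | partition_on {1..k} P. ?S P)" .
  moreover have "0 \<le> (\<integral>\<omega>. (\<Prod>i\<in>{1..k}. f i (v i \<omega>)) \<partial>M)"
    using fv01 by (intro integral_nonneg_AE AE_I2 prod_nonneg) auto
  moreover have "0 \<le> (\<Sum>P | partition_on {1..k} P. ?S P)"
    using EPPF_nonneg[OF EP k] Q_nonneg by (intro sum_nonneg mult_nonneg_nonneg prod_nonneg) auto
  ultimately show ?thesis by simp
qed

section \<open>Stick-breaking weights\<close>

lemma prod_stick_weights:
  fixes u :: "nat \<Rightarrow> 'a \<Rightarrow> real"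
  assumes L: "finite L" and dd: "\<And>l. l \<in> L \<Longrightarrow> 1 \<le> dd l \<and> dd l \<le> k"
  shows "(\<Prod>l\<in>L. stick_weights u \<omega> (dd l))
       = (\<Prod>i\<in>{1..k}. u i \<omega> ^ card {l\<in>L. dd l = i} * (1 - u i \<omega>) ^ card {l\<in>L. dd l > i})"
proof -
  have "(\<Prod>l\<in>L. stick_weights u \<omega> (dd l)) = (\<Prod>l\<in>L. u (dd l) \<omega> * (\<Prod>i\<in>{1..<dd l}. 1 - u i \<omega>))"
  proof (intro prod.cong refl)
    fix l assume "l \<in> L"
    with dd[of l] show "stick_weights u \<omega> (dd l) = u (dd l) \<omega> * (\<Prod>i\<in>{1..<dd l}. 1 - u i \<omega>)"
      by (simp add: stick_weights_def)
  qed
  also have "\<dots> = (\<Prod>l\<in>L. u (dd l) \<omega>) * (\<Prod>l\<in>L. \<Prod>i\<in>{1..<dd l}. 1 - u i \<omega>)"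
    by (rule prod.distrib)
  also have "(\<Prod>l\<in>L. u (dd l) \<omega>) = (\<Prod>i\<in>{1..k}. \<Prod>l\<in>{l\<in>L. dd l = i}. u (dd l) \<omega>)"
    using dd L by (intro prod.group[symmetric]) auto
  also have "\<dots> = (\<Prod>i\<in>{1..k}. u i \<omega> ^ card {l\<in>L. dd l = i})"
    by (intro prod.cong refl) simp
  also have "(\<Prod>l\<in>L. \<Prod>i\<in>{1..<dd l}. 1 - u i \<omega>) = (\<Prod>l\<in>L. \<Prod>i\<in>{1..k}. if i < dd l then 1 - u i \<omega> else 1)"
  proof (rule prod.cong[OF refl])
    fix l assume "l \<in> L"
    then have "{1..<dd l} = {1..k} \<inter> {i. i < dd l}" using dd[of l] by auto
    then show "(\<Prod>i\<in>{1..<dd l}. 1 - u i \<omega>) = (\<Prod>i\<in>{1..k}. if i < dd l then 1 - u i \<omega> else 1)"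
      by (simp add: prod.If_cases)
  qed
  also have "\<dots> = (\<Prod>i\<in>{1..k}. (1 - u i \<omega>) ^ card {l\<in>L. dd l > i})"
    using L by (subst prod.swap) (simp add: prod.If_cases Collect_conj_eq Int_commute)
  finally show ?thesis by (simp add: prod.distrib)
qed

lemma measure_cond_iid_given_stick_weights:
  assumes CW: "cond_iid_given_weights M (stick_weights v) d"
    and dd: "\<And>l. l \<in> {1..n} \<Longrightarrow> 1 \<le> dd l \<and> dd l \<le> k"
  shows "measure M {\<omega>\<in>space M. \<forall>l\<in>{1..n}. d l \<omega> = dd l}
    = (\<integral>\<omega>. (\<Prod>i\<in>{1..k}. v i \<omega> ^ card {l\<in>{1..n}. dd l = i} * (1 - v i \<omega>) ^ card {l\<in>{1..n}. dd l > i}) \<partial>M)"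
proof -
  have "space M \<in> sets (vimage_algebra (space M) (stick_weights v) (Pi\<^sub>M UNIV (\<lambda>_. borel)))"
    by (metis sets.top space_vimage_algebra)
  then have "measure M (space M \<inter> {\<omega>\<in>space M. \<forall>l\<in>{1..n}. d l \<omega> = dd l})
      = (\<integral>\<omega>. indicator (space M) \<omega> * (\<Prod>l\<in>{1..n}. stick_weights v \<omega> (dd l)) \<partial>M)"
    using CW unfolding cond_iid_given_weights_def by blast
  also have "\<dots> = (\<integral>\<omega>. (\<Prod>i\<in>{1..k}. v i \<omega> ^ card {l\<in>{1..n}. dd l = i} * (1 - v i \<omega>) ^ card {l\<in>{1..n}. dd l > i}) \<partial>M)"
    using prod_stick_weights[where u=v, OF finite_atLeastAtMost dd]
    by (intro Bochner_Integration.integral_cong) simp_all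
  moreover have "space M \<inter> {\<omega>\<in>space M. \<forall>l\<in>{1..n}. d l \<omega> = dd l} = {\<omega>\<in>space M. \<forall>l\<in>{1..n}. d l \<omega> = dd l}"
    by blast
  ultimately show ?thesis by simp
qed

theorem theorem4:
  fixes M :: "'a measure" and \<nu>0 :: "real measure"
    and p \<eta> v :: "nat \<Rightarrow> 'a \<Rightarrow> real" and \<nu> :: "'a \<Rightarrow> real measure"
    and \<pi> :: "nat multiset \<Rightarrow> real" and d :: "nat \<Rightarrow> 'a \<Rightarrow> nat"
    and n :: nat and dd :: "nat \<Rightarrow> nat"
  assumes "prob_space M"
    and "diffuse_base \<nu>0"
    and "species_sampling M \<nu>0 p \<eta> \<nu>"
    and "cond_iid_given_measure M \<nu> v"
    and "is_EPPF M v \<pi>"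
    and "cond_iid_given_weights M (stick_weights v) d"
    and "n \<ge> 1"
    and "\<forall>l\<in>{1..n}. dd l \<ge> 1"
  shows "measure M {\<omega>\<in>space M. \<forall>l\<in>{1..n}. d l \<omega> = dd l}
    = (\<Sum>P | partition_on {1..Max (dd ` {1..n})} P.
         \<pi> (image_mset card (mset_set P)) *
         (\<Prod>A\<in>P. \<integral>x. x ^ (\<Sum>i\<in>A. card {l\<in>{1..n}. dd l = i})
                       * (1 - x) ^ (\<Sum>i\<in>A. card {l\<in>{1..n}. dd l > i}) \<partial>\<nu>0))"
proof -
  define k where "k = Max (dd ` {1..n})"
  define f where "f i x = x ^ card {l\<in>{1..n}. dd l = i} * (1 - x) ^ card {l\<in>{1..n}. dd l > i}"
    for i and x :: real
  have dd: "1 \<le> dd l \<and> dd l \<le> k" if "l \<in> {1..n}" for l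
    using assms(8) that by (auto simp: k_def intro!: Max_ge)
  have k: "1 \<le> k" using dd[of 1] assms(7) by auto
  have f: "f i \<in> borel_measurable borel" for i
    unfolding f_def by measurable
  have f01: "0 \<le> f i x \<and> f i x \<le> 1" if "x \<in> {0..1}" for i x
    using that by (auto simp: f_def intro!: mult_le_one power_le_one)
  have "measure M {\<omega>\<in>space M. \<forall>l\<in>{1..n}. d l \<omega> = dd l} = (\<integral>\<omega>. (\<Prod>i\<in>{1..k}. f i (v i \<omega>)) \<partial>M)"
    unfolding f_def by (rule measure_cond_iid_given_stick_weights[OF assms(6) dd])
  also have "\<dots> = (\<Sum>P | partition_on {1..k} P. \<pi> (image_mset card (mset_set P)) * (\<Prod>A\<in>P. \<integral>x. (\<Prod>i\<in>A. f i x) \<partial>\<nu>0))"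
    using f f01 by (rule integral_prod_species_sampling[OF assms(1-5) k])
  finally show ?thesis
    by (simp add: k_def f_def prod.distrib power_sum)
qed

end
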